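(* Suppose that $1/n \ll \beta, \varepsilon \ll d$. Let $G[A,B]$ be a bipartite graph which is $(d, \varepsilon)$-super-regular (respectively $(d, \varepsilon)$-regular), where $|A|,|B| \le n$, and let $x_1, \dotsc, x_s$ and $y_1, \dotsc, y_t$ be positive integers each of size at least $\beta n$ such that $\sum_{i \in [s]} x_i \le |A|$ and $\sum_{j \in [t]} y_j \le |B|$. If $\{X_1, \dotsc, X_s\}$ is a collection of disjoint subsets of $A$ and $\{Y_1, \dotsc, Y_t\}$ is a collection of disjoint subsets of $B$ with $|X_i| = x_i$ and $|Y_j| = y_j$ for all $i \in [s]$, $j \in [t]$, selected uniformly at random from all such collections, then with probability at least $1 - e^{-\Omega(n)}$ the graph $G[X_i, Y_j]$ is $(d, \varepsilon')$-super-regular (respectively $(d, \varepsilon')$-regular) for all $i \in [s]$ and $j \in [t]$, where $\varepsilon' := (33 \varepsilon)^{1/5}$.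
   Context: For disjoint vertex sets $A, B$ of a graph $G$, $G[A,B]$ is the bipartite subgraph with classes $A,B$ consisting of the edges of $G$ between $A$ and $B$, and $d_G(A,B) := e(G[A,B])/(|A||B|)$. $G[A,B]$ is $(d,\varepsilon)$-regular if $d_G(X,Y) = d \pm \varepsilon$ (i.e. $d-\varepsilon \le d_G(X,Y) \le d+\varepsilon$) for all $X \subseteq A$, $Y \subseteq B$ with $|X| \ge \varepsilon|A|$, $|Y| \ge \varepsilon |B|$; it is $(\geq d,\varepsilon)$-regular if it is $(d',\varepsilon)$-regular for some $d' \ge d$; it is $(d,\varepsilon)$-super-regular if it is $(\geq d,\varepsilon)$-regular, every vertex of $A$ has at least $(d-\varepsilon)|B|$ neighbours in $B$ and every vertex of $B$ has at least $(d-\varepsilon)|A|$ neighbours in $A$. Notation $x \ll y$ means: for every $y>0$ there is $x_0>0$ such that the statement holds whenever $0 < x \le x_0$; hierarchies with more constants are read similarly, constants being chosen from right to left (so $1/n \ll \cdot$ means $n$ is sufficiently large). $[n] = \{1,\dots,n\}$. *)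

theory Defs
  imports Complex_Main
begin

text \<open>A bipartite graph G[A,B] is given by an adjacency relation E; only pairs
(a,b) with a in A and b in B matter.\<close>

definition edges_between :: "('a \<Rightarrow> 'a \<Rightarrow> bool) \<Rightarrow> 'a set \<Rightarrow> 'a set \<Rightarrow> ('a \<times> 'a) set" where
  "edges_between E X Y = {(a, b). a \<in> X \<and> b \<in> Y \<and> E a b}"

definition dens :: "('a \<Rightarrow> 'a \<Rightarrow> bool) \<Rightarrow> 'a set \<Rightarrow> 'a set \<Rightarrow> real" where
  "dens E X Y = real (card (edges_between E X Y)) / (real (card X) * real (card Y))"

definition regular_pair :: "('a \<Rightarrow> 'a \<Rightarrow> bool) \<Rightarrow> 'a set \<Rightarrow> 'a set \<Rightarrow> real \<Rightarrow> real \<Rightarrow> bool" where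
  "regular_pair E A B d eps \<longleftrightarrow>
     (\<forall>X Y. X \<subseteq> A \<longrightarrow> Y \<subseteq> B \<longrightarrow> real (card X) \<ge> eps * real (card A)
        \<longrightarrow> real (card Y) \<ge> eps * real (card B)
        \<longrightarrow> d - eps \<le> dens E X Y \<and> dens E X Y \<le> d + eps)"

definition regular_pair_ge :: "('a \<Rightarrow> 'a \<Rightarrow> bool) \<Rightarrow> 'a set \<Rightarrow> 'a set \<Rightarrow> real \<Rightarrow> real \<Rightarrow> bool" where
  "regular_pair_ge E A B d eps \<longleftrightarrow> (\<exists>d'. d' \<ge> d \<and> regular_pair E A B d' eps)"

definition super_regular_pair :: "('a \<Rightarrow> 'a \<Rightarrow> bool) \<Rightarrow> 'a set \<Rightarrow> 'a set \<Rightarrow> real \<Rightarrow> real \<Rightarrow> bool" where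
  "super_regular_pair E A B d eps \<longleftrightarrow>
     regular_pair_ge E A B d eps \<and>
     (\<forall>a\<in>A. real (card {b\<in>B. E a b}) \<ge> (d - eps) * real (card B)) \<and>
     (\<forall>b\<in>B. real (card {a\<in>A. E a b}) \<ge> (d - eps) * real (card A))"

definition collections :: "'a set \<Rightarrow> nat \<Rightarrow> (nat \<Rightarrow> nat) \<Rightarrow> (nat \<Rightarrow> 'a set) set" where
  "collections A s x = {X. (\<forall>i\<in>{1..s}. X i \<subseteq> A \<and> card (X i) = x i)
       \<and> (\<forall>i\<in>{1..s}. \<forall>j\<in>{1..s}. i \<noteq> j \<longrightarrow> X i \<inter> X j = {})
       \<and> (\<forall>i. i \<notin> {1..s} \<longrightarrow> X i = {})}"

definition unif_prob :: "'b set \<Rightarrow> ('b \<Rightarrow> bool) \<Rightarrow> real" where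
  "unif_prob S P = real (card {z\<in>S. P z}) / real (card S)"

end

theory Submission
  imports Defs "HOL-Analysis.Convex" "HOL-Real_Asymp.Real_Asymp"
begin

text \<open>
  For \<open>T \<subseteq> B\<close>, the size of the intersection of a uniformly random \<open>m\<close>-subset of \<open>B\<close> with
  \<open>T\<close> is hypergeometric; comparing its binomial moments with those of \<open>T\<close> bounds the probability
  of an excess \<open>\<lambda>m\<close> over the mean by \<open>exp (1 - \<lambda>\<^sup>2 m / 8)\<close>, and a layer-cake discretisation
  extends this to sums of \<open>[-1, 1]\<close>-valued weights over the random subset.

  Regularity of \<open>G[A, B]\<close> at density \<open>r\<close> is measured by the codegree-deviation mass
  \<open>Q(A, B) = \<Sum>a, a' \<in> A. |\<Sum>b \<in> B. (1\<^sub>E(a, b) - r) (1\<^sub>E(a', b) - r)|\<close>: an \<open>(r, \<epsilon>)\<close>-regular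
  pair has \<open>Q(A, B) \<le> 3\<epsilon> |A|\<^sup>2 |B|\<close>, and by Cauchy--Schwarz \<open>Q(X, Y) \<le> \<epsilon>'\<^sup>5 |X|\<^sup>2 |Y|\<close> forces
  \<open>(r, \<epsilon>')\<close>-regularity. \<open>Q(X\<^sub>i, Y\<^sub>j)\<close> and all degrees in \<open>G[X\<^sub>i, Y\<^sub>j]\<close> are controlled by
  polynomially many sums of bounded weights over \<open>X\<^sub>i\<close> or over \<open>Y\<^sub>j\<close>. Each part of a uniformly
  random collection is a uniformly random subset of its size and there are at most \<open>2/\<beta>\<close> parts,
  so with probability \<open>1 - e\<^sup>-\<^sup>\<Omega>\<^sup>(\<^sup>n\<^sup>)\<close> all these sums are within \<open>4\<epsilon>|X\<^sub>i|\<close> (resp. \<open>4\<epsilon>|Y\<^sub>j|\<close>)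
  of their means; then \<open>Q(X\<^sub>i, Y\<^sub>j) \<le> 15\<epsilon> |X\<^sub>i|\<^sup>2 |Y\<^sub>j|\<close> and degrees drop by at most \<open>4\<epsilon>\<close>.
\<close>

definition subsets_of_size :: "'a set \<Rightarrow> nat \<Rightarrow> 'a set set" where
  "subsets_of_size B m = {S. S \<subseteq> B \<and> card S = m}"

lemma card_subsets_of_size: "finite B \<Longrightarrow> card (subsets_of_size B m) = card B choose m"
  unfolding subsets_of_size_def by (rule n_subsets)

lemma finite_subsets_of_size: "finite B \<Longrightarrow> finite (subsets_of_size B m)"
  unfolding subsets_of_size_def by auto

lemma real_Suc_times_choose_Suc:
  "real (Suc k) * real (n choose Suc k) = real (n choose k) * (real n - real k)"
proof (cases "k \<le> n")
  case True
  have "Suc k * (n choose Suc k) = n * ((n - 1) choose k)" by (rule binomial_absorption)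
  also have "\<dots> = (n - k) * (n choose k)" by (rule binomial_absorb_comp[symmetric])
  finally have "real (Suc k * (n choose Suc k)) = real ((n - k) * (n choose k))" by simp
  then show ?thesis using True by (simp add: of_nat_diff algebra_simps)
qed (simp add: binomial_eq_0)

text \<open>Both inductions below compare the quotients
  \<open>C(n, k+1) / C(n, k) = (n - k) / (k + 1)\<close> term by term.\<close>

lemma choose_times_power_le:
  assumes "t \<le> N"
  shows "real (t choose k) * real N ^ k \<le> real t ^ k * real (N choose k)"
proof (induction k)
  case (Suc k)
  show ?case
  proof (cases "k < t")
    case False
    then show ?thesis by (simp add: binomial_eq_0)
  next
    case True
    have step: "(real t - real k) * real N \<le> real t * (real N - real k)"
      using assms mult_left_mono[of "real t" "real N" "real k"] by (simp add: algebra_simps)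
    have "real (Suc k) * (real (t choose Suc k) * real N ^ Suc k)
        = (real (t choose k) * real N ^ k) * ((real t - real k) * real N)"
      by (subst mult.assoc[symmetric], subst real_Suc_times_choose_Suc) (simp add: mult_ac)
    also have "\<dots> \<le> (real t ^ k * real (N choose k)) * (real t * (real N - real k))"
      by (rule mult_mono[OF Suc.IH step]) (use True in auto)
    also have "\<dots> = real (Suc k) * (real (N choose Suc k) * real t ^ Suc k)"
      by (subst mult.assoc[symmetric], subst real_Suc_times_choose_Suc) (simp add: mult_ac)
    finally show ?thesis by (simp add: mult_ac)
  qed
qed simp

lemma choose_times_power_le_geometric:
  fixes p lam :: real
  assumes p: "0 \<le> p" "p \<le> 1" and lam: "0 < lam" "lam \<le> 1"
    and k1: "(p + lam) * real m \<le> real k1" and k: "real k \<le> lam * real m / 2"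
  shows "real (m choose k) * p ^ k \<le> (1 / (1 + lam / 2)) ^ k * real (k1 choose k)"
  using k
proof (induction k)
  case (Suc k)
  define \<rho> where "\<rho> = 1 / (1 + lam / 2)"
  have \<rho>: "0 < \<rho>" using lam by (simp add: \<rho>_def)
  have km: "real k < lam * real m / 2" using Suc.prems by simp
  have "lam * real m \<le> real m" using lam mult_right_mono[of lam 1 "real m"] by simp
  then have mk: "0 \<le> real m - real k" using km by linarith
  have step: "p * (real m - real k) \<le> \<rho> * (real k1 - real k)"
  proof -
    have "p * (real m - real k) * (1 + lam / 2) \<le> p * real m + p * (lam * real m / 2)"
      using p lam mk by (simp add: algebra_simps mult_left_mono)
    also have "\<dots> \<le> p * real m + lam * real m / 2"
      using p lam mult_right_mono[of p 1 "lam * real m / 2"] by simp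
    also have "\<dots> \<le> real k1 - real k" using k1 km by (simp add: algebra_simps)
    finally show ?thesis using lam unfolding \<rho>_def by (simp add: field_simps)
  qed
  have "real (Suc k) * (real (m choose Suc k) * p ^ Suc k)
      = (real (m choose k) * p ^ k) * (p * (real m - real k))"
    by (subst mult.assoc[symmetric], subst real_Suc_times_choose_Suc) (simp add: mult_ac)
  also have "\<dots> \<le> (\<rho> ^ k * real (k1 choose k)) * (\<rho> * (real k1 - real k))"
  proof (rule mult_mono[OF _ step])
    show "real (m choose k) * p ^ k \<le> \<rho> ^ k * real (k1 choose k)"
      using Suc.IH km unfolding \<rho>_def by simp
  qed (use p mk \<rho> in auto)
  also have "\<dots> = real (Suc k) * (real (k1 choose Suc k) * \<rho> ^ Suc k)"
    by (subst mult.assoc[symmetric], subst real_Suc_times_choose_Suc) (simp add: mult_ac)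
  finally have "real (Suc k) * (real (m choose Suc k) * p ^ Suc k)
      \<le> real (Suc k) * (\<rho> ^ Suc k * real (k1 choose Suc k))"
    by (simp only: mult_ac)
  then show ?case unfolding \<rho>_def by (rule mult_left_le_imp_le) simp
qed simp

lemma sum_card_filter_swap:
  assumes "finite U" "finite V"
  shows "(\<Sum>S\<in>U. card {Z\<in>V. P S Z}) = (\<Sum>Z\<in>V. card {S\<in>U. P S Z})"
proof -
  have "(\<Sum>S\<in>U. card {Z\<in>V. P S Z}) = (\<Sum>S\<in>U. \<Sum>Z\<in>V. if P S Z then 1 else 0)"
    using assms by (simp add: sum.inter_filter[symmetric])
  also have "\<dots> = (\<Sum>Z\<in>V. \<Sum>S\<in>U. if P S Z then 1 else 0)" by (rule sum.swap)
  also have "\<dots> = (\<Sum>Z\<in>V. card {S\<in>U. P S Z})"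
    using assms by (simp add: sum.inter_filter[symmetric])
  finally show ?thesis .
qed

lemma card_supersets_of_size_le:
  assumes B: "finite B" and Z: "Z \<subseteq> B" "card Z = k"
  shows "card {S\<in>subsets_of_size B m. Z \<subseteq> S} \<le> (card B - k) choose (m - k)"
proof -
  have fZ: "finite Z" using Z B finite_subset by blast
  have "card {S\<in>subsets_of_size B m. Z \<subseteq> S} \<le> card (subsets_of_size (B - Z) (m - k))"
  proof (rule card_inj_on_le[where f = "\<lambda>S. S - Z"])
    show "inj_on (\<lambda>S. S - Z) {S \<in> subsets_of_size B m. Z \<subseteq> S}"
      by (rule inj_onI) auto
    show "(\<lambda>S. S - Z) ` {S \<in> subsets_of_size B m. Z \<subseteq> S} \<subseteq> subsets_of_size (B - Z) (m - k)"
      using fZ Z by (auto simp: subsets_of_size_def card_Diff_subset)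
  qed (use B in \<open>simp add: finite_subsets_of_size\<close>)
  also have "\<dots> = (card B - k) choose (m - k)"
    using B Z fZ by (simp add: card_subsets_of_size card_Diff_subset)
  finally show ?thesis .
qed

text \<open>Double counting pairs \<open>Z \<subseteq> S\<close> with \<open>Z\<close> a \<open>k\<close>-subset of \<open>T\<close>:
  the \<open>k\<close>-th binomial moment of the hypergeometric variable \<open>|S \<inter> T|\<close>.\<close>

lemma sum_choose_card_Int_le:
  assumes B: "finite B" and T: "T \<subseteq> B"
  shows "(\<Sum>S\<in>subsets_of_size B m. card (S \<inter> T) choose k)
    \<le> (card T choose k) * ((card B - k) choose (m - k))"
proof -
  have fT: "finite T" using B T finite_subset by blast
  have "card (S \<inter> T) choose k = card {Z\<in>subsets_of_size T k. Z \<subseteq> S}" for S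
  proof -
    have "subsets_of_size (S \<inter> T) k = {Z\<in>subsets_of_size T k. Z \<subseteq> S}"
      unfolding subsets_of_size_def by auto
    then show ?thesis using fT card_subsets_of_size[of "S \<inter> T" k] by simp
  qed
  then have "(\<Sum>S\<in>subsets_of_size B m. card (S \<inter> T) choose k)
      = (\<Sum>S\<in>subsets_of_size B m. card {Z\<in>subsets_of_size T k. Z \<subseteq> S})" by simp
  also have "\<dots> = (\<Sum>Z\<in>subsets_of_size T k. card {S\<in>subsets_of_size B m. Z \<subseteq> S})"
    using B fT by (intro sum_card_filter_swap finite_subsets_of_size)
  also have "\<dots> \<le> (\<Sum>Z\<in>subsets_of_size T k. (card B - k) choose (m - k))"
    using T by (intro sum_mono card_supersets_of_size_le[OF B]) (auto simp: subsets_of_size_def)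
  also have "\<dots> = (card T choose k) * ((card B - k) choose (m - k))"
    using fT by (simp add: card_subsets_of_size)
  finally show ?thesis .
qed

lemma card_large_Int_times_choose_le:
  assumes B: "finite B" and T: "T \<subseteq> B" and k: "k \<le> k1"
  shows "card {S\<in>subsets_of_size B m. k1 \<le> card (S \<inter> T)} * (k1 choose k)
    \<le> (card T choose k) * ((card B - k) choose (m - k))"
proof -
  let ?Bad = "{S\<in>subsets_of_size B m. k1 \<le> card (S \<inter> T)}"
  have "card ?Bad * (k1 choose k) \<le> (\<Sum>S\<in>?Bad. card (S \<inter> T) choose k)"
    using sum_mono[of ?Bad "\<lambda>_. k1 choose k" "\<lambda>S. card (S \<inter> T) choose k"]
    by (simp add: binomial_right_mono)
  also have "\<dots> \<le> (\<Sum>S\<in>subsets_of_size B m. card (S \<inter> T) choose k)"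
    using B by (intro sum_mono2 finite_subsets_of_size) auto
  also have "\<dots> \<le> (card T choose k) * ((card B - k) choose (m - k))"
    by (rule sum_choose_card_Int_le[OF B T])
  finally show ?thesis .
qed

lemma inverse_power_le_exp:
  fixes lam :: real
  assumes "0 < lam" "lam \<le> 1" "lam * real m / 2 - 1 \<le> real k"
  shows "(1 / (1 + lam / 2)) ^ k \<le> exp (1 - lam^2 * real m / 8)"
proof -
  have "lam / 2 - (lam/2)^2 \<le> ln (1 + lam / 2)"
    using assms by (intro ln_one_plus_pos_lower_bound) auto
  moreover have "lam / 4 \<le> lam / 2 - (lam/2)^2"
    using assms by (simp add: power2_eq_square)
  ultimately have "exp (lam / 4) \<le> 1 + lam / 2"
    using assms by (metis order.trans exp_le_cancel_iff exp_ln add_pos_pos zero_less_one half_gt_zero)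
  then have "exp (lam / 4) ^ k \<le> (1 + lam / 2) ^ k"
    by (rule power_mono) simp
  then have "exp (real k * (lam / 4)) \<le> (1 + lam / 2) ^ k"
    by (simp only: exp_of_nat_mult)
  then have "(1 / (1 + lam / 2)) ^ k \<le> exp (- (real k * (lam / 4)))"
    using assms by (simp add: power_one_over exp_minus field_simps)
  also have "\<dots> \<le> exp (1 - lam^2 * real m / 8)"
    using assms mult_right_mono[of "lam * real m / 2 - 1" "real k" "lam / 4"]
    by (simp add: power2_eq_square field_simps)
  finally show ?thesis .
qed

text \<open>The moment method with \<open>k \<approx> \<lambda>m/2\<close>: the tail event \<open>|S \<inter> T| \<ge> (p + \<lambda>)m\<close>,
  \<open>p = |T|/|B|\<close>, has \<open>C(|S \<inter> T|, k) \<ge> C(k1, k)\<close>, whereas the mean of \<open>C(|S \<inter> T|, k)\<close>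
  is at most \<open>p\<^sup>k C(m, k)\<close>.\<close>

lemma hypergeometric_upper_tail:
  fixes lam :: real
  assumes B: "finite B" and T: "T \<subseteq> B" and N: "card B > 0" and mN: "m \<le> card B"
    and lam: "0 < lam" "lam \<le> 1"
  shows "real (card {S\<in>subsets_of_size B m.
            real (card (S \<inter> T)) \<ge> (real (card T) / real (card B) + lam) * real m})
         \<le> exp (1 - lam^2 * real m / 8) * real (card B choose m)"
proof -
  define N where "N = card B"
  define t where "t = card T"
  define p where "p = real t / real N"
  define k where "k = nat \<lfloor>lam * real m / 2\<rfloor>"
  define k1 where "k1 = nat \<lceil>(p + lam) * real m\<rceil>"
  have tN: "t \<le> N" unfolding t_def N_def using T B card_mono by blast
  have Npos: "0 < N" using N N_def by simp
  have p: "0 \<le> p" "p \<le> 1" using tN Npos by (auto simp: p_def)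
  have "real k = of_int \<lfloor>lam * real m / 2\<rfloor>" using lam unfolding k_def by simp
  then have kr: "real k \<le> lam * real m / 2" "lam * real m / 2 - 1 \<le> real k"
    by linarith+
  have "lam * real m \<le> real m" using lam mult_right_mono[of lam 1 "real m"] by simp
  then have km: "k \<le> m" using kr by linarith
  have k1r: "(p + lam) * real m \<le> real k1" unfolding k1_def by linarith
  have "lam * real m / 2 \<le> (p + lam) * real m" using p lam by (simp add: algebra_simps)
  then have kk1: "k \<le> k1" using kr k1r by linarith
  have Bad: "{S\<in>subsets_of_size B m. real (card (S \<inter> T)) \<ge> (p + lam) * real m}
      = {S\<in>subsets_of_size B m. k1 \<le> card (S \<inter> T)}"
    unfolding k1_def by (auto simp: nat_le_iff ceiling_le_iff)
  define bad where "bad = real (card {S\<in>subsets_of_size B m. k1 \<le> card (S \<inter> T)})"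
  have "bad * real (k1 choose k) * real (N choose k)
      \<le> real (t choose k) * real ((N - k) choose (m - k)) * real (N choose k)"
    using card_large_Int_times_choose_le[OF B T kk1, of m] unfolding bad_def t_def N_def
    by (intro mult_right_mono) (simp_all flip: of_nat_mult)
  also have "\<dots> = real (t choose k) * (real (N choose m) * real (m choose k))"
  proof -
    have "real (N choose m) * real (m choose k) = real (N choose k) * real ((N - k) choose (m - k))"
      using choose_mult[OF km mN] unfolding N_def by (metis of_nat_mult)
    then show ?thesis by (simp only: mult_ac)
  qed
  also have "\<dots> \<le> p ^ k * real (N choose k) * (real (N choose m) * real (m choose k))"
    using choose_times_power_le[OF tN, of k] Npos
    by (intro mult_right_mono) (simp_all add: p_def power_divide field_simps)
  finally have "bad * real (k1 choose k) \<le> real (N choose m) * (real (m choose k) * p ^ k)"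
    using km mN Npos by (simp add: N_def mult_ac mult_le_cancel_right_pos)
  also have "\<dots> \<le> real (N choose m) * ((1 / (1 + lam / 2)) ^ k * real (k1 choose k))"
    by (intro mult_left_mono choose_times_power_le_geometric[OF p lam k1r kr(1)]) simp
  finally have "bad \<le> real (N choose m) * (1 / (1 + lam / 2)) ^ k"
    using kk1 by (simp add: mult_ac mult_le_cancel_right_pos)
  also have "\<dots> \<le> real (N choose m) * exp (1 - lam^2 * real m / 8)"
    by (intro mult_left_mono inverse_power_le_exp) (use lam kr in auto)
  finally show ?thesis using Bad unfolding bad_def p_def t_def N_def by (simp add: mult_ac)
qed

lemma card_less_real_bounds:
  fixes x :: real
  assumes "0 \<le> x" "x \<le> real K"
  shows "x \<le> real (card {k\<in>{..<K}. real k < x})" "real (card {k\<in>{..<K}. real k < x}) \<le> x + 1"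
proof -
  have iff: "k < nat \<lceil>x\<rceil> \<longleftrightarrow> real k < x" for k
    using assms(1) less_ceiling_iff[of "int k" x] by linarith
  have "\<lceil>x\<rceil> \<le> int K" using assms(2) by (simp add: ceiling_le_iff)
  then have "{k\<in>{..<K}. real k < x} = {..<nat \<lceil>x\<rceil>}"
    unfolding iff[symmetric] by (auto simp: nat_le_iff)
  moreover have "real (nat \<lceil>x\<rceil>) = of_int \<lceil>x\<rceil>" using assms by simp
  ultimately show "x \<le> real (card {k\<in>{..<K}. real k < x})"
    "real (card {k\<in>{..<K}. real k < x}) \<le> x + 1"
    using le_of_int_ceiling[of x] ceiling_correct[of x] by simp_all
qed

text \<open>Layer-cake discretisation of \<open>g : B \<rightarrow> [0, 1]\<close> into the level sets
  \<open>{b. k < K g b}\<close>, \<open>k < K\<close>; each element is counted \<open>\<lceil>K g b\<rceil>\<close> times.\<close>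

lemma layer_cake_bounds:
  fixes g :: "'a \<Rightarrow> real"
  assumes S: "finite S" and g: "\<And>b. b \<in> S \<Longrightarrow> 0 \<le> g b \<and> g b \<le> 1"
  shows "real K * (\<Sum>b\<in>S. g b) \<le> (\<Sum>k<K. real (card {b\<in>S. real k < real K * g b}))"
    and "(\<Sum>k<K. real (card {b\<in>S. real k < real K * g b})) \<le> real K * (\<Sum>b\<in>S. g b) + real (card S)"
proof -
  have gK: "0 \<le> real K * g b \<and> real K * g b \<le> real K" if "b \<in> S" for b
    using g[OF that] by (simp add: mult_left_le)
  have swap: "(\<Sum>k<K. real (card {b\<in>S. real k < real K * g b}))
      = (\<Sum>b\<in>S. real (card {k\<in>{..<K}. real k < real K * g b}))"
    using sum_card_filter_swap[OF finite_lessThan S, of "\<lambda>k b. real k < real K * g b"]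
    by (simp flip: of_nat_sum)
  show "real K * (\<Sum>b\<in>S. g b) \<le> (\<Sum>k<K. real (card {b\<in>S. real k < real K * g b}))"
    unfolding swap sum_distrib_left using gK card_less_real_bounds(1) by (intro sum_mono) blast
  have "(\<Sum>k<K. real (card {b\<in>S. real k < real K * g b})) \<le> (\<Sum>b\<in>S. real K * g b + 1)"
    unfolding swap using gK card_less_real_bounds(2) by (intro sum_mono) blast
  then show "(\<Sum>k<K. real (card {b\<in>S. real k < real K * g b})) \<le> real K * (\<Sum>b\<in>S. g b) + real (card S)"
    by (simp add: sum.distrib sum_distrib_left)
qed

lemma sum_le_if_levels_typical:
  fixes g :: "'a \<Rightarrow> real"
  assumes B: "finite B" and N: "card B > 0" and g: "\<And>b. b \<in> B \<Longrightarrow> 0 \<le> g b \<and> g b \<le> 1"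
    and S: "S \<subseteq> B" and K: "1 \<le> lam * real K"
    and typical: "\<And>k. k < K \<Longrightarrow> real (card {b\<in>S. real k < real K * g b})
      \<le> (real (card {b\<in>B. real k < real K * g b}) / real (card B) + lam) * real (card S)"
  shows "(\<Sum>b\<in>S. g b) \<le> real (card S) / real (card B) * (\<Sum>b\<in>B. g b) + 2 * lam * real (card S)"
proof -
  define m where "m = real (card S)"
  define N where "N = real (card B)"
  have K1: "1 \<le> real K" using K by (cases K) auto
  have "m \<le> lam * m * real K" using mult_left_mono[OF K, of m] by (simp add: m_def mult_ac)
  then have Kl: "m / real K \<le> lam * m" using K1 by (simp add: divide_le_eq)
  have Npos: "0 < N" using N by (simp add: N_def)
  have "real K * (\<Sum>b\<in>S. g b) \<le> (\<Sum>k<K. real (card {b\<in>S. real k < real K * g b}))"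
    using layer_cake_bounds(1)[of S g K] S B g by (auto intro: finite_subset)
  also have "\<dots> \<le> (\<Sum>k<K. (real (card {b\<in>B. real k < real K * g b}) / N + lam) * m)"
    using typical unfolding m_def N_def by (intro sum_mono) auto
  also have "\<dots> = m / N * (\<Sum>k<K. real (card {b\<in>B. real k < real K * g b})) + real K * lam * m"
    by (simp add: sum.distrib sum_distrib_left sum_divide_distrib algebra_simps)
  also have "\<dots> \<le> m / N * (real K * (\<Sum>b\<in>B. g b) + N) + real K * lam * m"
    using layer_cake_bounds(2)[of B g K] B g Npos
    by (intro add_right_mono mult_left_mono) (auto simp: N_def m_def)
  also have "\<dots> = real K * (m / N * (\<Sum>b\<in>B. g b) + m / real K + lam * m)"
    using Npos K1 by (simp add: field_simps)
  also have "\<dots> \<le> real K * (m / N * (\<Sum>b\<in>B. g b) + 2 * lam * m)"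
    using Kl K1 by (intro mult_left_mono) auto
  finally show ?thesis using K1 unfolding m_def N_def by (simp add: mult_le_cancel_left_pos)
qed

lemma sample_sum_upper_tail:
  fixes lam :: real and g :: "'a \<Rightarrow> real"
  assumes B: "finite B" and N: "card B > 0" and mN: "m \<le> card B"
    and lam: "0 < lam" "lam \<le> 1" and g: "\<And>b. b \<in> B \<Longrightarrow> 0 \<le> g b \<and> g b \<le> 1"
  shows "real (card {S\<in>subsets_of_size B m.
            (\<Sum>b\<in>S. g b) > real m / real (card B) * (\<Sum>b\<in>B. g b) + 2 * lam * real m})
     \<le> real (nat \<lceil>1 / lam\<rceil>) * exp (1 - lam^2 * real m / 8) * real (card B choose m)"
proof -
  define K where "K = nat \<lceil>1 / lam\<rceil>"
  have "1 / lam \<le> real K" unfolding K_def by linarith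
  then have K: "1 \<le> lam * real K" using lam by (simp add: field_simps)
  define T where "T k = {b\<in>B. real k < real K * g b}" for k
  define Bad where "Bad k = {S\<in>subsets_of_size B m.
      real (card (S \<inter> T k)) \<ge> (real (card (T k)) / real (card B) + lam) * real m}" for k
  let ?U = "{S\<in>subsets_of_size B m.
      (\<Sum>b\<in>S. g b) > real m / real (card B) * (\<Sum>b\<in>B. g b) + 2 * lam * real m}"
  have "?U \<subseteq> (\<Union>k<K. Bad k)"
  proof (rule subsetI, rule ccontr)
    fix S assume S: "S \<in> ?U" and nb: "S \<notin> (\<Union>k<K. Bad k)"
    have SB: "S \<subseteq> B" and cS: "card S = m" using S unfolding subsets_of_size_def by auto
    have "S \<inter> T k = {b\<in>S. real k < real K * g b}" for k using SB unfolding T_def by auto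
    then have "real (card {b\<in>S. real k < real K * g b})
        \<le> (real (card {b\<in>B. real k < real K * g b}) / real (card B) + lam) * real (card S)"
      if "k < K" for k
      using nb that cS S by (auto simp: Bad_def T_def not_le intro: less_imp_le)
    then have "(\<Sum>b\<in>S. g b) \<le> real m / real (card B) * (\<Sum>b\<in>B. g b) + 2 * lam * real m"
      using sum_le_if_levels_typical[where g = g, OF B N g SB K] cS by simp
    then show False using S by simp
  qed
  then have "card ?U \<le> card (\<Union>k<K. Bad k)"
    using finite_subsets_of_size[OF B] by (intro card_mono) (auto simp: Bad_def)
  also have "\<dots> \<le> (\<Sum>k<K. card (Bad k))" by (rule card_UN_le) simp
  finally have "real (card ?U) \<le> (\<Sum>k<K. real (card (Bad k)))"
    by (simp only: of_nat_sum[symmetric] of_nat_le_iff)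
  also have "\<dots> \<le> (\<Sum>k<K. exp (1 - lam^2 * real m / 8) * real (card B choose m))"
    unfolding Bad_def by (intro sum_mono hypergeometric_upper_tail[OF B _ N mN lam]) (auto simp: T_def)
  finally show ?thesis unfolding K_def by simp
qed

text \<open>The \<open>[0, 1]\<close>-valued weight \<open>(1 + g) / 2\<close> halves both the excess and the slack.\<close>

lemma sample_sum_excess_tail:
  fixes lam :: real and g :: "'a \<Rightarrow> real"
  assumes B: "finite B" and N: "card B > 0" and mN: "m \<le> card B"
    and lam: "0 < lam" "lam \<le> 1" and g: "\<And>b. b \<in> B \<Longrightarrow> \<bar>g b\<bar> \<le> 1"
  shows "real (card {S\<in>subsets_of_size B m.
            (\<Sum>b\<in>S. g b) - real m / real (card B) * (\<Sum>b\<in>B. g b) > 4 * lam * real m})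
     \<le> real (nat \<lceil>1 / lam\<rceil>) * exp (1 - lam^2 * real m / 8) * real (card B choose m)"
proof -
  define c where "c = real m / real (card B)"
  have half_sum: "(\<Sum>b\<in>X. (1 + g b) / 2) = (real (card X) + (\<Sum>b\<in>X. g b)) / 2" for X
    by (simp add: sum_divide_distrib[symmetric] sum.distrib)
  have "c * real (card B) = real m" using N unfolding c_def by simp
  then have "c * ((real (card B) + (\<Sum>b\<in>B. g b)) / 2) = (real m + c * (\<Sum>b\<in>B. g b)) / 2"
    by (simp add: distrib_left)
  then have "{S\<in>subsets_of_size B m. (\<Sum>b\<in>S. g b) - c * (\<Sum>b\<in>B. g b) > 4 * lam * real m}
      \<subseteq> {S\<in>subsets_of_size B m. (\<Sum>b\<in>S. (1 + g b) / 2) > c * (\<Sum>b\<in>B. (1 + g b) / 2) + 2 * lam * real m}"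
    unfolding half_sum by (auto simp: subsets_of_size_def field_simps)
  then have "real (card {S\<in>subsets_of_size B m. (\<Sum>b\<in>S. g b) - c * (\<Sum>b\<in>B. g b) > 4 * lam * real m})
      \<le> real (card {S\<in>subsets_of_size B m.
          (\<Sum>b\<in>S. (1 + g b) / 2) > c * (\<Sum>b\<in>B. (1 + g b) / 2) + 2 * lam * real m})"
    using finite_subsets_of_size[OF B] by (intro of_nat_mono card_mono) auto
  also have "\<dots> \<le> real (nat \<lceil>1 / lam\<rceil>) * exp (1 - lam^2 * real m / 8) * real (card B choose m)"
    unfolding c_def using g by (intro sample_sum_upper_tail[OF B N mN lam]) (force simp: abs_le_iff)
  finally show ?thesis unfolding c_def .
qed

definition tail_bound :: "real \<Rightarrow> nat \<Rightarrow> real" where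
  "tail_bound lam m = 2 * real (nat \<lceil>1 / lam\<rceil>) * exp (1 - lam^2 * real m / 8)"

lemma tail_bound_nonneg: "0 \<le> tail_bound lam m"
  unfolding tail_bound_def by simp

lemma sample_sum_deviation:
  fixes lam :: real and g :: "'a \<Rightarrow> real"
  assumes B: "finite B" and N: "card B > 0" and mN: "m \<le> card B"
    and lam: "0 < lam" "lam \<le> 1" and g: "\<And>b. b \<in> B \<Longrightarrow> \<bar>g b\<bar> \<le> 1"
  shows "real (card {S\<in>subsets_of_size B m.
            \<bar>(\<Sum>b\<in>S. g b) - real m / real (card B) * (\<Sum>b\<in>B. g b)\<bar> > 4 * lam * real m})
     \<le> tail_bound lam m * real (card B choose m)"
proof -
  let ?excess = "\<lambda>h. {S\<in>subsets_of_size B m.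
      (\<Sum>b\<in>S. h b) - real m / real (card B) * (\<Sum>b\<in>B. h b) > 4 * lam * real m}"
  have "{S\<in>subsets_of_size B m.
      \<bar>(\<Sum>b\<in>S. g b) - real m / real (card B) * (\<Sum>b\<in>B. g b)\<bar> > 4 * lam * real m}
      = ?excess g \<union> ?excess (\<lambda>b. - g b)"
    by (auto simp: abs_if sum_negf)
  then have "real (card {S\<in>subsets_of_size B m.
      \<bar>(\<Sum>b\<in>S. g b) - real m / real (card B) * (\<Sum>b\<in>B. g b)\<bar> > 4 * lam * real m})
      \<le> real (card (?excess g)) + real (card (?excess (\<lambda>b. - g b)))"
    using card_Un_le[of "?excess g" "?excess (\<lambda>b. - g b)"] by (simp flip: of_nat_add)
  also have "\<dots> \<le> tail_bound lam m * real (card B choose m)"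
    using sample_sum_excess_tail[OF B N mN lam, of g] sample_sum_excess_tail[OF B N mN lam, of "\<lambda>b. - g b"] g
    unfolding tail_bound_def by simp
  finally show ?thesis .
qed

definition representative :: "real \<Rightarrow> 'a set \<Rightarrow> ('a \<Rightarrow> real) \<Rightarrow> 'a set \<Rightarrow> bool" where
  "representative lam B g S \<longleftrightarrow>
     \<bar>(\<Sum>b\<in>S. g b) - real (card S) / real (card B) * (\<Sum>b\<in>B. g b)\<bar> \<le> 4 * lam * real (card S)"

lemma card_not_representative_le:
  fixes lam :: real and g :: "'i \<Rightarrow> 'a \<Rightarrow> real"
  assumes B: "finite B" and N: "card B > 0" and mN: "m \<le> card B"
    and lam: "0 < lam" "lam \<le> 1" and I: "finite I"
    and g: "\<And>i b. i \<in> I \<Longrightarrow> b \<in> B \<Longrightarrow> \<bar>g i b\<bar> \<le> 1"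
  shows "real (card {S\<in>subsets_of_size B m. \<exists>i\<in>I. \<not> representative lam B (g i) S})
     \<le> real (card I) * tail_bound lam m * real (card B choose m)"
proof -
  let ?bad = "\<lambda>i. {S\<in>subsets_of_size B m.
      \<bar>(\<Sum>b\<in>S. g i b) - real m / real (card B) * (\<Sum>b\<in>B. g i b)\<bar> > 4 * lam * real m}"
  have "{S\<in>subsets_of_size B m. \<exists>i\<in>I. \<not> representative lam B (g i) S} = (\<Union>i\<in>I. ?bad i)"
    by (auto simp: representative_def subsets_of_size_def not_le)
  then have "real (card {S\<in>subsets_of_size B m. \<exists>i\<in>I. \<not> representative lam B (g i) S})
      \<le> (\<Sum>i\<in>I. real (card (?bad i)))"
    using card_UN_le[OF I, of ?bad] by (simp flip: of_nat_sum)
  also have "\<dots> \<le> (\<Sum>i\<in>I. tail_bound lam m * real (card B choose m))"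
    using g by (intro sum_mono sample_sum_deviation[OF B N mN lam]) auto
  finally show ?thesis by simp
qed

lemma collections_subset: "X \<in> collections A s x \<Longrightarrow> X j \<subseteq> A"
  unfolding collections_def by (cases "j \<in> {1..s}") auto

lemma finite_collections:
  assumes A: "finite A" shows "finite (collections A s x)"
proof -
  have "collections A s x \<subseteq> {f. \<forall>i. (i \<in> {1..s} \<longrightarrow> f i \<in> Pow A) \<and> (i \<notin> {1..s} \<longrightarrow> f i = {})}"
    unfolding collections_def by auto
  moreover have "finite {f. \<forall>i. (i \<in> {1..s} \<longrightarrow> f i \<in> Pow A) \<and> (i \<notin> {1..s} \<longrightarrow> f i = {})}"
    using A by (intro finite_set_of_finite_funs) auto
  ultimately show ?thesis using finite_subset by blast
qed

lemma collections_nonempty: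
  assumes A: "finite A" and sx: "(\<Sum>i=1..s. x i) \<le> card A"
  shows "collections A s x \<noteq> {}"
proof -
  obtain e where e: "bij_betw e {0..<card A} A" using A ex_bij_betw_nat_finite by blast
  then have inj: "inj_on e {0..<card A}" and img: "e ` {0..<card A} = A" by (auto simp: bij_betw_def)
  define pre where "pre i = (\<Sum>k\<in>{1..<i}. x k)" for i
  define I where "I i = {pre i..<pre (Suc i)}" for i
  have pre_Suc: "pre (Suc i) = pre i + x i" if "1 \<le> i" for i
    unfolding pre_def using that by (simp add: sum.atLeastLessThan_Suc)
  have pre_mono: "pre i \<le> pre j" if "i \<le> j" for i j
    unfolding pre_def using that by (intro sum_mono2) auto
  have I_sub: "I i \<subseteq> {0..<card A}" if "i \<in> {1..s}" for i
    using pre_mono[of "Suc i" "Suc s"] sx that by (auto simp: I_def pre_def atLeastLessThanSuc_atLeastAtMost)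
  have I_disj: "I i \<inter> I j = {}" if "i \<noteq> j" for i j
    using pre_mono[of "Suc i" j] pre_mono[of "Suc j" i] that by (cases "i < j") (auto simp: I_def)
  define X where "X i = (if i \<in> {1..s} then e ` I i else {})" for i
  have "X \<in> collections A s x"
    unfolding collections_def
  proof (intro CollectI conjI ballI impI allI)
    fix i assume i: "i \<in> {1..s}"
    show "X i \<subseteq> A" unfolding X_def using i I_sub img by auto
    show "card (X i) = x i"
      unfolding X_def using i card_image[OF inj_on_subset[OF inj I_sub[OF i]]] pre_Suc by (simp add: I_def)
  next
    fix i j assume ij: "i \<in> {1..s}" "j \<in> {1..s}" "i \<noteq> j"
    then have "e ` I i \<inter> e ` I j = e ` (I i \<inter> I j)"
      using inj_on_image_Int[OF inj I_sub[of i] I_sub[of j]] by simp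
    then show "X i \<inter> X j = {}" unfolding X_def using ij I_disj[of i j] by simp
  next
    fix i assume "i \<notin> {1..s}" then show "X i = {}" unfolding X_def by auto
  qed
  then show ?thesis by blast
qed

lemma ex_permutation_mapping:
  assumes A: "finite A" and S: "S \<in> subsets_of_size A m" and S': "S' \<in> subsets_of_size A m"
  shows "\<exists>\<pi>. bij_betw \<pi> A A \<and> \<pi> ` S = S'"
proof -
  have SA: "S \<subseteq> A" "card S = m" and SA': "S' \<subseteq> A" "card S' = m" using S S' unfolding subsets_of_size_def by auto
  have fS: "finite S" "finite S'" using SA SA' A finite_subset by blast+
  obtain f1 where f1: "bij_betw f1 S S'" using finite_same_card_bij[OF fS] SA SA' by auto
  have "card (A - S) = card (A - S')" using SA SA' fS by (simp add: card_Diff_subset)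
  then obtain f2 where f2: "bij_betw f2 (A - S) (A - S')" using finite_same_card_bij A by blast
  define \<pi> where "\<pi> a = (if a \<in> S then f1 a else f2 a)" for a
  have b1: "bij_betw \<pi> S S'" using f1 by (rule bij_betw_cong[THEN iffD1, rotated]) (simp add: \<pi>_def)
  have b2: "bij_betw \<pi> (A - S) (A - S')" using f2 by (rule bij_betw_cong[THEN iffD1, rotated]) (simp add: \<pi>_def)
  have "bij_betw \<pi> (S \<union> (A - S)) (S' \<union> (A - S'))" by (rule bij_betw_combine[OF b1 b2]) auto
  moreover have "S \<union> (A - S) = A" "S' \<union> (A - S') = A" using SA SA' by auto
  ultimately have "bij_betw \<pi> A A" by simp
  moreover have "\<pi> ` S = S'" using b1 bij_betw_imp_surj_on by blast
  ultimately show ?thesis by blast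
qed

lemma permute_collections:
  assumes \<pi>: "bij_betw \<pi> A A" and X: "X \<in> collections A s x"
  shows "(\<lambda>j. \<pi> ` X j) \<in> collections A s x"
proof -
  have inj: "inj_on \<pi> A" and surj: "\<pi> ` A = A" using \<pi> by (auto simp: bij_betw_def)
  have XA: "X j \<subseteq> A" for j using collections_subset[OF X] .
  show ?thesis unfolding collections_def
  proof (intro CollectI conjI ballI impI allI)
    fix j assume j: "j \<in> {1..s}"
    show "\<pi> ` X j \<subseteq> A" using XA[of j] surj by auto
    show "card (\<pi> ` X j) = x j"
      using card_image[OF inj_on_subset[OF inj XA[of j]]] X j unfolding collections_def by auto
  next
    fix j k assume "j \<in> {1..s}" "k \<in> {1..s}" "j \<noteq> k"
    then have "X j \<inter> X k = {}" using X unfolding collections_def by auto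
    then show "\<pi> ` X j \<inter> \<pi> ` X k = {}" using inj_on_image_Int[OF inj XA[of j] XA[of k]] by simp
  next
    fix j assume "j \<notin> {1..s}"
    then show "\<pi> ` X j = {}" using X unfolding collections_def by auto
  qed
qed

lemma card_collections_with_component_le:
  assumes A: "finite A" and S: "S \<in> subsets_of_size A (x i)" and S': "S' \<in> subsets_of_size A (x i)"
  shows "card {X\<in>collections A s x. X i = S} \<le> card {X\<in>collections A s x. X i = S'}"
proof -
  obtain \<pi> where \<pi>: "bij_betw \<pi> A A" and im: "\<pi> ` S = S'" using ex_permutation_mapping[OF A S S'] by blast
  have inj: "inj_on \<pi> A" using \<pi> bij_betw_imp_inj_on by blast
  show ?thesis
  proof (rule card_inj_on_le[where f = "\<lambda>X j. \<pi> ` X j"])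
    show "inj_on (\<lambda>X j. \<pi> ` X j) {X \<in> collections A s x. X i = S}"
    proof (rule inj_onI, rule ext)
      fix X Y j assume "X \<in> {X \<in> collections A s x. X i = S}" "Y \<in> {X \<in> collections A s x. X i = S}"
        and "(\<lambda>j. \<pi> ` X j) = (\<lambda>j. \<pi> ` Y j)"
      then show "X j = Y j"
        using inj_on_image_eq_iff[OF inj collections_subset collections_subset] by (metis (mono_tags) mem_Collect_eq)
    qed
    show "(\<lambda>X j. \<pi> ` X j) ` {X \<in> collections A s x. X i = S} \<subseteq> {X \<in> collections A s x. X i = S'}"
      using permute_collections[OF \<pi>] im by auto
  qed (use finite_collections[OF A] in simp)
qed

text \<open>All fibres \<open>{X. X i = S}\<close> have the same size, so the \<open>i\<close>-th part of a uniformly random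
  collection is a uniformly random \<open>x i\<close>-subset of \<open>A\<close>.\<close>

lemma card_collections_component_proportion:
  assumes A: "finite A" and i: "i \<in> {1..s}"
  shows "real (card {X\<in>collections A s x. P (X i)}) * real (card A choose x i)
       = real (card {S\<in>subsets_of_size A (x i). P S}) * real (card (collections A s x))"
proof -
  let ?C = "collections A s x"
  let ?M = "subsets_of_size A (x i)"
  define fibre where "fibre S = {X\<in>?C. X i = S}" for S
  have finC: "finite ?C" by (rule finite_collections[OF A])
  have finM: "finite ?M" using A by (rule finite_subsets_of_size)
  have Xi: "X i \<in> ?M" if "X \<in> ?C" for X using that i unfolding collections_def subsets_of_size_def by auto
  have cardsum: "card {X\<in>?C. Q (X i)} = (\<Sum>S\<in>{S\<in>?M. Q S}. card (fibre S))" for Q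
  proof -
    have "{X\<in>?C. Q (X i)} = (\<Union>S\<in>{S\<in>?M. Q S}. fibre S)" unfolding fibre_def using Xi by auto
    moreover have "card (\<Union>S\<in>{S\<in>?M. Q S}. fibre S) = (\<Sum>S\<in>{S\<in>?M. Q S}. card (fibre S))"
      by (rule card_UN_disjoint) (use finM finC in \<open>auto simp: fibre_def\<close>)
    ultimately show ?thesis by simp
  qed
  show ?thesis
  proof (cases "?M = {}")
    case True
    then have "?C = {}" using Xi by blast
    then show ?thesis using True by simp
  next
    case False
    then obtain S0 where S0: "S0 \<in> ?M" by blast
    have const: "card (fibre S) = card (fibre S0)" if "S \<in> ?M" for S
      unfolding fibre_def
      using card_collections_with_component_le[where x = x and i = i and s = s, OF A that S0]
        card_collections_with_component_le[where x = x and i = i and s = s, OF A S0 that] by simp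
    have c1: "card {X\<in>?C. P (X i)} = card {S\<in>?M. P S} * card (fibre S0)"
      using cardsum[of P] const by simp
    have c2: "card ?C = card ?M * card (fibre S0)"
      using cardsum[of "\<lambda>_. True"] const by simp
    show ?thesis unfolding c2 using c1 card_subsets_of_size[OF A] by simp
  qed
qed

lemma card_collections_component_le:
  assumes A: "finite A" and i: "i \<in> {1..s}" and xi: "x i \<le> card A"
    and P: "real (card {S\<in>subsets_of_size A (x i). P S}) \<le> c * real (card A choose x i)"
  shows "real (card {X\<in>collections A s x. P (X i)}) \<le> c * real (card (collections A s x))"
proof -
  have "real (card {X\<in>collections A s x. P (X i)}) * real (card A choose x i)
      = real (card {S\<in>subsets_of_size A (x i). P S}) * real (card (collections A s x))"
    by (rule card_collections_component_proportion[OF A i])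
  also have "\<dots> \<le> c * real (card A choose x i) * real (card (collections A s x))"
    using P by (intro mult_right_mono) auto
  finally show ?thesis using xi by (simp add: mult_ac mult_le_cancel_left_pos)
qed

lemma unif_prob_ge:
  assumes U: "finite U" "U \<noteq> {}" and fail: "real (card {z\<in>U. \<not> P z}) \<le> c * real (card U)"
  shows "1 - c \<le> unif_prob U P"
proof -
  have "card U = card ({z\<in>U. P z} \<union> {z\<in>U. \<not> P z})" by (rule arg_cong[where f = card]) auto
  also have "\<dots> = card {z\<in>U. P z} + card {z\<in>U. \<not> P z}" using U by (intro card_Un_disjoint) auto
  finally have "card {z\<in>U. P z} + card {z\<in>U. \<not> P z} = card U" ..
  moreover have "0 < real (card U)" using U by (simp add: card_gt_0_iff)
  ultimately show ?thesis using fail unfolding unif_prob_def by (simp add: field_simps flip: of_nat_add)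
qed

definition adj_ind :: "('a \<Rightarrow> 'a \<Rightarrow> bool) \<Rightarrow> 'a \<Rightarrow> 'a \<Rightarrow> real" where
  "adj_ind E a b = (if E a b then 1 else 0)"

definition adj_dev :: "('a \<Rightarrow> 'a \<Rightarrow> bool) \<Rightarrow> real \<Rightarrow> 'a \<Rightarrow> 'a \<Rightarrow> real" where
  "adj_dev E r a b = adj_ind E a b - r"

definition codev :: "('a \<Rightarrow> 'a \<Rightarrow> bool) \<Rightarrow> real \<Rightarrow> 'a set \<Rightarrow> 'a \<Rightarrow> 'a \<Rightarrow> real" where
  "codev E r Y a a' = (\<Sum>b\<in>Y. adj_dev E r a b * adj_dev E r a' b)"

definition codev_mass :: "('a \<Rightarrow> 'a \<Rightarrow> bool) \<Rightarrow> real \<Rightarrow> 'a set \<Rightarrow> 'a set \<Rightarrow> real" where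
  "codev_mass E r X Y = (\<Sum>a\<in>X. \<Sum>a'\<in>X. \<bar>codev E r Y a a'\<bar>)"

lemma abs_adj_dev_le_1: "0 \<le> r \<Longrightarrow> r \<le> 1 \<Longrightarrow> \<bar>adj_dev E r a b\<bar> \<le> 1"
  unfolding adj_dev_def adj_ind_def by auto

lemma abs_adj_dev_mult_le_1: "0 \<le> r \<Longrightarrow> r \<le> 1 \<Longrightarrow> \<bar>adj_dev E r a b * adj_dev E r a' b\<bar> \<le> 1"
  using abs_adj_dev_le_1[of r E a b] abs_adj_dev_le_1[of r E a' b] by (simp add: abs_mult mult_le_one)

lemma abs_codev_le_card:
  assumes "0 \<le> r" "r \<le> 1"
  shows "\<bar>codev E r Y a a'\<bar> \<le> real (card Y)"
proof -
  have "\<bar>codev E r Y a a'\<bar> \<le> (\<Sum>b\<in>Y. \<bar>adj_dev E r a b * adj_dev E r a' b\<bar>)"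
    unfolding codev_def by (rule sum_abs)
  also have "\<dots> \<le> (\<Sum>b\<in>Y. 1)"
    using abs_adj_dev_mult_le_1[OF assms] by (rule sum_mono)
  finally show ?thesis by simp
qed

lemma card_right_neighbours: "finite Y \<Longrightarrow> real (card {b\<in>Y. E a b}) = (\<Sum>b\<in>Y. adj_ind E a b)"
  unfolding adj_ind_def by (simp add: sum.inter_filter[symmetric])

lemma card_left_neighbours: "finite X \<Longrightarrow> real (card {a\<in>X. E a b}) = (\<Sum>a\<in>X. adj_ind E a b)"
  unfolding adj_ind_def by (simp add: sum.inter_filter[symmetric])

lemma card_edges_between_eq_sum:
  assumes "finite X" "finite Y"
  shows "real (card (edges_between E X Y)) = (\<Sum>a\<in>X. \<Sum>b\<in>Y. adj_ind E a b)"
proof -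
  have "edges_between E X Y = Sigma X (\<lambda>a. {b\<in>Y. E a b})" unfolding edges_between_def by auto
  then have "card (edges_between E X Y) = (\<Sum>a\<in>X. card {b\<in>Y. E a b})"
    using assms by (simp add: card_SigmaI)
  then show ?thesis using card_right_neighbours[OF assms(2)] by simp
qed

lemma edge_excess_eq_sum:
  assumes "finite X" "finite Y"
  shows "real (card (edges_between E X Y)) - r * real (card X) * real (card Y)
    = (\<Sum>a\<in>X. \<Sum>b\<in>Y. adj_dev E r a b)"
  unfolding card_edges_between_eq_sum[OF assms] adj_dev_def by (simp add: sum_subtractf)

lemma regular_pair_excess_le:
  assumes A: "finite A" and B: "finite B" and reg: "regular_pair E A B r ep" and ep: "0 < ep"
    and X: "X \<subseteq> A" "ep * real (card A) \<le> real (card X)" "X \<noteq> {}"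
    and Y: "Y \<subseteq> B" "ep * real (card B) \<le> real (card Y)" "Y \<noteq> {}"
  shows "\<bar>\<Sum>a\<in>X. \<Sum>b\<in>Y. adj_dev E r a b\<bar> \<le> ep * real (card X) * real (card Y)"
proof -
  have fin: "finite X" "finite Y" using A B X Y finite_subset by blast+
  then have cxy: "0 < card X" "0 < card Y" using X Y by (simp_all add: card_gt_0_iff)
  then have xy: "0 < real (card X) * real (card Y)" by simp
  have "r - ep \<le> dens E X Y \<and> dens E X Y \<le> r + ep" using reg X Y unfolding regular_pair_def by blast
  then have "\<bar>dens E X Y - r\<bar> \<le> ep" unfolding abs_le_iff by linarith
  moreover have "dens E X Y - r = (\<Sum>a\<in>X. \<Sum>b\<in>Y. adj_dev E r a b) / (real (card X) * real (card Y))"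
    unfolding dens_def edge_excess_eq_sum[OF fin, symmetric] using cxy by (simp add: diff_divide_distrib)
  ultimately show ?thesis using xy by (simp add: abs_divide divide_le_eq mult_ac)
qed

text \<open>Cauchy--Schwarz over \<open>Y'\<close> turns the edge excess of \<open>(X', Y')\<close> into
  codegree deviations, which are then summed over all of \<open>X \<times> X\<close>.\<close>

lemma edge_excess_sq_le_codev_mass:
  assumes X: "finite X" and Y: "finite Y" and X': "X' \<subseteq> X" and Y': "Y' \<subseteq> Y"
  shows "(real (card (edges_between E X' Y')) - r * real (card X') * real (card Y'))^2
     \<le> real (card Y') * codev_mass E r X Y"
proof -
  have fX': "finite X'" and fY': "finite Y'" using X Y X' Y' finite_subset by blast+
  define S where "S b = (\<Sum>a\<in>X'. adj_dev E r a b)" for b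
  have "real (card (edges_between E X' Y')) - r * real (card X') * real (card Y') = (\<Sum>b\<in>Y'. S b)"
    unfolding edge_excess_eq_sum[OF fX' fY'] S_def by (rule sum.swap)
  moreover have "(\<Sum>b\<in>Y'. S b)^2 \<le> real (card Y') * (\<Sum>b\<in>Y. (S b)^2)"
    using sum_squared_le_sum_of_squares[of S Y'] sum_mono2[OF Y Y', of "\<lambda>b. (S b)^2"]
    by (simp add: mult.commute order_trans mult_left_mono)
  moreover have "(\<Sum>b\<in>Y. (S b)^2) = (\<Sum>a\<in>X'. \<Sum>a'\<in>X'. codev E r Y a a')"
    unfolding S_def codev_def power2_eq_square sum_product
    by (subst sum.swap) (simp add: sum.swap[of _ Y])
  moreover have "(\<Sum>a\<in>X'. \<Sum>a'\<in>X'. codev E r Y a a') \<le> codev_mass E r X Y"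
  proof -
    have "(\<Sum>a\<in>X'. \<Sum>a'\<in>X'. codev E r Y a a') \<le> (\<Sum>a\<in>X'. \<Sum>a'\<in>X'. \<bar>codev E r Y a a'\<bar>)"
      by (intro sum_mono) auto
    also have "\<dots> \<le> (\<Sum>a\<in>X. \<Sum>a'\<in>X. \<bar>codev E r Y a a'\<bar>)"
      using X X' by (intro order.trans[OF sum_mono sum_mono2] sum_mono2 sum_nonneg) auto
    finally show ?thesis unfolding codev_mass_def .
  qed
  ultimately show ?thesis by (smt (verit) mult_left_mono of_nat_0_le_iff)
qed

lemma regular_pair_if_codev_mass_le:
  assumes X: "finite X" and Y: "finite Y" and ep: "0 < ep" and X0: "card X > 0" and Y0: "card Y > 0"
    and Q: "codev_mass E r X Y \<le> ep^5 * real (card X)^2 * real (card Y)"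
  shows "regular_pair E X Y r ep"
  unfolding regular_pair_def
proof (intro allI impI)
  fix X' Y' assume X': "X' \<subseteq> X" and Y': "Y' \<subseteq> Y"
    and cX: "ep * real (card X) \<le> real (card X')" and cY: "ep * real (card Y) \<le> real (card Y')"
  define x where "x = real (card X)"
  define y where "y = real (card Y)"
  define x' where "x' = real (card X')"
  define y' where "y' = real (card Y')"
  define e where "e = real (card (edges_between E X' Y'))"
  have ex: "ep * x \<le> x'" and ey: "ep * y \<le> y'" using cX cY unfolding x_def y_def x'_def y'_def .
  have x0: "0 \<le> x" "0 \<le> y" unfolding x_def y_def by simp_all
  have xp: "0 < x'" "0 < y'"
    using ep X0 Y0 ex ey unfolding x_def y_def by (smt (verit) mult_pos_pos of_nat_0_less_iff)+
  have "(e - r * x' * y')^2 \<le> y' * (ep^5 * x^2 * y)"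
    using edge_excess_sq_le_codev_mass[OF X Y X' Y', of E r] Q xp
    unfolding e_def x'_def y'_def x_def y_def by (smt (verit) mult_left_mono)
  also have "\<dots> = y' * ((ep * x)^2 * (ep * y) * ep^2)" by (simp add: power2_eq_square eval_nat_numeral)
  also have "\<dots> \<le> y' * (x'^2 * y' * ep^2)"
  proof -
    have "(ep * x)^2 \<le> x'^2" using ex ep x0 by (intro power_mono) auto
    then have "(ep * x)^2 * (ep * y) \<le> x'^2 * y'" using ey ep x0 by (intro mult_mono) auto
    then show ?thesis using xp by (intro mult_left_mono mult_right_mono) auto
  qed
  also have "\<dots> = (ep * x' * y')^2" by (simp add: power2_eq_square)
  finally have "\<bar>e - r * x' * y'\<bar>^2 \<le> (ep * x' * y')^2" by (simp only: power2_abs)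
  then have "\<bar>e - r * x' * y'\<bar> \<le> ep * x' * y'" by (rule power2_le_imp_le) (use ep xp in simp)
  moreover have "dens E X' Y' - r = (e - r * x' * y') / (x' * y')"
    unfolding dens_def e_def x'_def y'_def using xp x'_def y'_def by (simp add: diff_divide_distrib)
  ultimately have "\<bar>dens E X' Y' - r\<bar> \<le> ep"
    using xp by (simp add: abs_divide divide_le_eq mult_ac)
  then show "r - ep \<le> dens E X' Y' \<and> dens E X' Y' \<le> r + ep" by linarith
qed

lemma card_degree_excess_lt:
  assumes A: "finite A" and B: "finite B" and A0: "card A > 0" and ep: "0 < ep"
    and reg: "regular_pair E A B r ep" and U: "U \<subseteq> B" "ep * real (card B) \<le> real (card U)" "U \<noteq> {}"
    and \<sigma>: "\<bar>\<sigma>\<bar> = 1"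
  shows "real (card {a\<in>A. ep * real (card U) < \<sigma> * (\<Sum>b\<in>U. adj_dev E r a b)}) < ep * real (card A)"
proof (rule ccontr)
  define D where "D a = (\<Sum>b\<in>U. adj_dev E r a b)" for a
  define P where "P = {a\<in>A. ep * real (card U) < \<sigma> * D a}"
  assume "\<not> ?thesis"
  then have cP: "ep * real (card A) \<le> real (card P)" unfolding P_def D_def by simp
  moreover have "0 < ep * real (card A)" using ep A0 by simp
  ultimately have Pne: "P \<noteq> {}" by auto
  have fP: "finite P" using A by (simp add: P_def)
  have "real (card P) * (ep * real (card U)) < (\<Sum>a\<in>P. \<sigma> * D a)"
    using sum_strict_mono[OF fP Pne, of "\<lambda>_. ep * real (card U)" "\<lambda>a. \<sigma> * D a"] by (simp add: P_def)
  also have "\<dots> \<le> \<bar>\<Sum>a\<in>P. D a\<bar>"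
    using \<sigma> abs_ge_self[of "\<sigma> * (\<Sum>a\<in>P. D a)"] by (simp add: sum_distrib_left[symmetric] abs_mult)
  also have "\<dots> \<le> ep * real (card P) * real (card U)"
    unfolding D_def by (rule regular_pair_excess_le[OF A B reg ep _ cP Pne U]) (simp add: P_def)
  finally show False by (simp add: mult_ac)
qed

lemma sum_abs_degree_excess_le:
  assumes A: "finite A" and B: "finite B" and A0: "card A > 0" and B0: "card B > 0"
    and ep: "0 < ep" and r: "0 \<le> r" "r \<le> 1" and reg: "regular_pair E A B r ep" and U: "U \<subseteq> B"
  shows "(\<Sum>a\<in>A. \<bar>\<Sum>b\<in>U. adj_dev E r a b\<bar>) \<le> 3 * ep * real (card A) * real (card B)"
proof -
  define u where "u = real (card U)"
  define D where "D a = (\<Sum>b\<in>U. adj_dev E r a b)" for a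
  have uB: "u \<le> real (card B)" unfolding u_def using card_mono[OF B U] by simp
  have Dabs: "\<bar>D a\<bar> \<le> u" for a
  proof -
    have "\<bar>D a\<bar> \<le> (\<Sum>b\<in>U. \<bar>adj_dev E r a b\<bar>)" unfolding D_def by (rule sum_abs)
    also have "\<dots> \<le> (\<Sum>b\<in>U. 1)" using abs_adj_dev_le_1[OF r] by (rule sum_mono)
    finally show ?thesis by (simp add: u_def)
  qed
  show ?thesis
  proof (cases "u < ep * real (card B)")
    case True
    then have "(\<Sum>a\<in>A. \<bar>D a\<bar>) \<le> (\<Sum>a\<in>A. ep * real (card B))"
      using Dabs by (intro sum_mono) (smt (verit))
    also have "\<dots> \<le> 3 * ep * real (card A) * real (card B)" using ep by simp
    finally show ?thesis unfolding D_def .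
  next
    case False
    then have uge: "ep * real (card B) \<le> real (card U)" unfolding u_def by simp
    moreover have "0 < ep * real (card B)" using ep B0 by simp
    ultimately have Une: "U \<noteq> {}" by auto
    have few: "real (card {a\<in>A. ep * u < \<sigma> * D a}) < ep * real (card A)" if "\<bar>\<sigma>\<bar> = 1" for \<sigma>
      unfolding u_def D_def using card_degree_excess_lt[OF A B A0 ep reg U uge Une that] .
    have "{a\<in>A. ep * u < \<bar>D a\<bar>} = {a\<in>A. ep * u < 1 * D a} \<union> {a\<in>A. ep * u < (- 1) * D a}"
      by (auto simp: abs_if)
    then have "real (card {a\<in>A. ep * u < \<bar>D a\<bar>}) < 2 * ep * real (card A)"
      using few[of 1] few[of "- 1"] card_Un_le[of "{a\<in>A. ep * u < 1 * D a}" "{a\<in>A. ep * u < (- 1) * D a}"]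
      by (simp flip: of_nat_add)
    moreover have "0 \<le> ep * u" using ep by (simp add: u_def)
    then have "(\<Sum>a\<in>A. \<bar>D a\<bar>) \<le> (\<Sum>a\<in>A. ep * u + (if ep * u < \<bar>D a\<bar> then u else 0))"
      by (intro sum_mono) (smt (verit) Dabs)
    moreover have "\<dots> = real (card A) * (ep * u) + real (card {a\<in>A. ep * u < \<bar>D a\<bar>}) * u"
      using A by (simp add: sum.distrib sum.inter_filter[symmetric])
    ultimately have "(\<Sum>a\<in>A. \<bar>D a\<bar>) \<le> real (card A) * (ep * u) + 2 * ep * real (card A) * u"
      using uB by (smt (verit) mult_right_mono of_nat_0_le_iff u_def)
    also have "\<dots> \<le> 3 * ep * real (card A) * real (card B)"
      using ep mult_left_mono[OF uB, of "3 * ep * real (card A)"] by (simp add: algebra_simps)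
    finally show ?thesis unfolding D_def .
  qed
qed

lemma codev_mass_le_if_regular:
  assumes A: "finite A" and B: "finite B" and A0: "card A > 0" and B0: "card B > 0"
    and ep: "0 < ep" and r: "0 \<le> r" "r \<le> 1" and reg: "regular_pair E A B r ep"
  shows "codev_mass E r A B \<le> 3 * ep * real (card A)^2 * real (card B)"
proof -
  have row: "(\<Sum>a'\<in>A. \<bar>codev E r B a a'\<bar>) \<le> 3 * ep * real (card A) * real (card B)" for a
  proof -
    define N where "N = {b\<in>B. E a b}"
    have NB: "N \<subseteq> B" unfolding N_def by auto
    txt \<open>The weight \<open>adj_dev E r a b\<close> only takes the values \<open>1 - r\<close> on \<open>N\<close> and \<open>-r\<close> off \<open>N\<close>.\<close>
    have split: "codev E r B a a'
        = (1 - r) * (\<Sum>b\<in>N. adj_dev E r a' b) + (- r) * (\<Sum>b\<in>B - N. adj_dev E r a' b)" for a'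
    proof -
      have "codev E r B a a' = (\<Sum>b\<in>N. adj_dev E r a b * adj_dev E r a' b)
          + (\<Sum>b\<in>B - N. adj_dev E r a b * adj_dev E r a' b)"
        unfolding codev_def using sum.subset_diff[OF NB B] by (simp add: add.commute)
      also have "\<dots> = (\<Sum>b\<in>N. (1 - r) * adj_dev E r a' b) + (\<Sum>b\<in>B - N. (- r) * adj_dev E r a' b)"
        by (intro arg_cong2[where f = "(+)"] sum.cong) (auto simp: N_def adj_dev_def adj_ind_def)
      finally show ?thesis by (simp add: sum_distrib_left)
    qed
    have "(\<Sum>a'\<in>A. \<bar>codev E r B a a'\<bar>)
        \<le> (\<Sum>a'\<in>A. (1 - r) * \<bar>\<Sum>b\<in>N. adj_dev E r a' b\<bar> + r * \<bar>\<Sum>b\<in>B - N. adj_dev E r a' b\<bar>)"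
    proof (rule sum_mono)
      fix a'
      show "\<bar>codev E r B a a'\<bar>
          \<le> (1 - r) * \<bar>\<Sum>b\<in>N. adj_dev E r a' b\<bar> + r * \<bar>\<Sum>b\<in>B - N. adj_dev E r a' b\<bar>"
        unfolding split
        using abs_triangle_ineq[of "(1 - r) * (\<Sum>b\<in>N. adj_dev E r a' b)" "(- r) * (\<Sum>b\<in>B - N. adj_dev E r a' b)"] r
        by (simp add: abs_mult)
    qed
    also have "\<dots> = (1 - r) * (\<Sum>a'\<in>A. \<bar>\<Sum>b\<in>N. adj_dev E r a' b\<bar>)
        + r * (\<Sum>a'\<in>A. \<bar>\<Sum>b\<in>B - N. adj_dev E r a' b\<bar>)"
      by (simp add: sum.distrib sum_distrib_left)
    also have "\<dots> \<le> (1 - r) * (3 * ep * real (card A) * real (card B))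
        + r * (3 * ep * real (card A) * real (card B))"
      using r NB
      by (intro add_mono mult_left_mono sum_abs_degree_excess_le[OF A B A0 B0 ep r reg]) auto
    finally show ?thesis by (simp add: algebra_simps)
  qed
  have "codev_mass E r A B \<le> (\<Sum>a\<in>A. 3 * ep * real (card A) * real (card B))"
    unfolding codev_mass_def using row by (rule sum_mono)
  then show ?thesis by (simp add: power2_eq_square mult_ac)
qed

lemma representative_sum_le:
  "representative lam B g S \<Longrightarrow>
     (\<Sum>b\<in>S. g b) \<le> real (card S) / real (card B) * (\<Sum>b\<in>B. g b) + 4 * lam * real (card S)"
  unfolding representative_def by (simp add: abs_le_iff)

lemma representative_sum_ge:
  "representative lam B g S \<Longrightarrow>
     real (card S) / real (card B) * (\<Sum>b\<in>B. g b) - 4 * lam * real (card S) \<le> (\<Sum>b\<in>S. g b)"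
  unfolding representative_def by (simp add: abs_le_iff)

definition norm_codev :: "('a \<Rightarrow> 'a \<Rightarrow> bool) \<Rightarrow> real \<Rightarrow> 'a set \<Rightarrow> 'a \<Rightarrow> 'a \<Rightarrow> real" where
  "norm_codev E r B a a' = \<bar>codev E r B a a'\<bar> / real (card B)"

definition row_mass :: "('a \<Rightarrow> 'a \<Rightarrow> bool) \<Rightarrow> real \<Rightarrow> 'a set \<Rightarrow> 'a set \<Rightarrow> 'a \<Rightarrow> real" where
  "row_mass E r A B a = (\<Sum>a'\<in>A. norm_codev E r B a a')"

text \<open>The properties of a sampled part \<open>T \<subseteq> B\<close>, respectively \<open>S \<subseteq> A\<close>, that together
  control \<open>codev_mass E r S T\<close> and the degrees in \<open>G[S, T]\<close>; all weights are normalised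
  to take values in \<open>[-1, 1]\<close>.\<close>

definition typical_right :: "('a \<Rightarrow> 'a \<Rightarrow> bool) \<Rightarrow> real \<Rightarrow> 'a set \<Rightarrow> 'a set \<Rightarrow> real \<Rightarrow> 'a set \<Rightarrow> bool" where
  "typical_right E r A B lam T \<longleftrightarrow>
     (\<forall>p\<in>A \<times> A. representative lam B (\<lambda>b. adj_dev E r (fst p) b * adj_dev E r (snd p) b) T) \<and>
     (\<forall>a\<in>A. representative lam B (\<lambda>b. adj_ind E a b) T)"

definition typical_left :: "('a \<Rightarrow> 'a \<Rightarrow> bool) \<Rightarrow> real \<Rightarrow> 'a set \<Rightarrow> 'a set \<Rightarrow> real \<Rightarrow> 'a set \<Rightarrow> bool" where
  "typical_left E r A B lam S \<longleftrightarrow>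
     (\<forall>a\<in>A. representative lam A (norm_codev E r B a) S) \<and>
     representative lam A (\<lambda>a. row_mass E r A B a / real (card A)) S \<and>
     (\<forall>b\<in>B. representative lam A (\<lambda>a. adj_ind E a b) S)"

lemma norm_codev_bounds:
  assumes "0 \<le> r" "r \<le> 1" "card B > 0"
  shows "0 \<le> norm_codev E r B a a'" "norm_codev E r B a a' \<le> 1"
  unfolding norm_codev_def using abs_codev_le_card[OF assms(1,2), of E B a a'] assms(3) by auto

lemma row_mass_bounds:
  assumes "0 \<le> r" "r \<le> 1" "card B > 0" "card A > 0"
  shows "0 \<le> row_mass E r A B a / real (card A)" "row_mass E r A B a / real (card A) \<le> 1"
proof -
  have "0 \<le> row_mass E r A B a"
    unfolding row_mass_def using norm_codev_bounds(1)[OF assms(1-3)] by (rule sum_nonneg)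
  moreover have "row_mass E r A B a \<le> (\<Sum>a'\<in>A. 1)"
    unfolding row_mass_def using norm_codev_bounds(2)[OF assms(1-3)] by (rule sum_mono)
  ultimately
  show "0 \<le> row_mass E r A B a / real (card A)" "row_mass E r A B a / real (card A) \<le> 1"
    using assms(4) by simp_all
qed

lemma sum_norm_codev_typical_le:
  assumes A: "finite A" and B: "finite B" and A0: "card A > 0" and B0: "card B > 0"
    and ep: "0 < ep" and r: "0 \<le> r" "r \<le> 1" and reg: "regular_pair E A B r ep"
    and S: "S \<subseteq> A" and typS: "typical_left E r A B lam S"
  shows "(\<Sum>a\<in>S. \<Sum>a'\<in>S. norm_codev E r B a a') \<le> (3 * ep + 8 * lam) * real (card S)^2"
proof -
  define nA where "nA = real (card A)"
  define mS where "mS = real (card S)"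
  have nA: "0 < nA" using A0 unfolding nA_def by auto
  have mS: "0 \<le> mS" unfolding mS_def by auto
  have "(\<Sum>a\<in>S. \<Sum>a'\<in>S. norm_codev E r B a a') \<le> (\<Sum>a\<in>S. mS / nA * row_mass E r A B a + 4 * lam * mS)"
    using typS S unfolding typical_left_def row_mass_def mS_def nA_def
    by (intro sum_mono representative_sum_le) auto
  also have "\<dots> = mS / nA * (\<Sum>a\<in>S. row_mass E r A B a) + 4 * lam * mS^2"
    unfolding mS_def by (simp add: sum.distrib sum_distrib_left power2_eq_square algebra_simps)
  finally have rows: "(\<Sum>a\<in>S. \<Sum>a'\<in>S. norm_codev E r B a a')
      \<le> mS / nA * (\<Sum>a\<in>S. row_mass E r A B a) + 4 * lam * mS^2" .
  have "(\<Sum>a\<in>A. row_mass E r A B a) = codev_mass E r A B / real (card B)"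
    unfolding row_mass_def norm_codev_def codev_mass_def by (simp add: sum_divide_distrib)
  also have "\<dots> \<le> 3 * ep * nA^2"
    using codev_mass_le_if_regular[OF A B A0 B0 ep r reg] B0 unfolding nA_def
    by (simp add: divide_le_eq mult_ac)
  finally have all_rows: "(\<Sum>a\<in>A. row_mass E r A B a) \<le> 3 * ep * nA^2" .
  have "(\<Sum>a\<in>S. row_mass E r A B a / nA) \<le> mS / nA * (\<Sum>a\<in>A. row_mass E r A B a / nA) + 4 * lam * mS"
    using typS representative_sum_le unfolding typical_left_def mS_def nA_def by blast
  then have "(\<Sum>a\<in>S. row_mass E r A B a) \<le> mS / nA * (\<Sum>a\<in>A. row_mass E r A B a) + 4 * lam * mS * nA"
    using nA by (simp add: sum_divide_distrib[symmetric] field_simps)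
  also have "\<dots> \<le> mS / nA * (3 * ep * nA^2) + 4 * lam * mS * nA"
    using all_rows mS nA by (intro add_right_mono mult_left_mono) auto
  finally have "mS / nA * (\<Sum>a\<in>S. row_mass E r A B a) \<le> mS / nA * (mS / nA * (3 * ep * nA^2) + 4 * lam * mS * nA)"
    using mS nA by (intro mult_left_mono) auto
  also have "\<dots> = (3 * ep + 4 * lam) * mS^2" using nA by (simp add: power2_eq_square field_simps)
  finally show ?thesis using rows unfolding mS_def by (simp add: algebra_simps)
qed

lemma codev_mass_typical_le:
  assumes A: "finite A" and B: "finite B" and A0: "card A > 0" and B0: "card B > 0"
    and ep: "0 < ep" and r: "0 \<le> r" "r \<le> 1" and reg: "regular_pair E A B r ep"
    and S: "S \<subseteq> A" and T: "T \<subseteq> B"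
    and typS: "typical_left E r A B lam S" and typT: "typical_right E r A B lam T"
  shows "codev_mass E r S T \<le> (3 * ep + 12 * lam) * real (card S)^2 * real (card T)"
proof -
  define nB where "nB = real (card B)"
  define mS where "mS = real (card S)"
  define mT where "mT = real (card T)"
  have nB: "0 < nB" using B0 unfolding nB_def by auto
  have mT: "0 \<le> mT" unfolding mT_def by auto
  have "\<bar>codev E r T a a'\<bar> \<le> mT * norm_codev E r B a a' + 4 * lam * mT" if "a \<in> A" "a' \<in> A" for a a'
  proof -
    have "\<bar>codev E r T a a' - mT / nB * codev E r B a a'\<bar> \<le> 4 * lam * mT"
      using typT that unfolding typical_right_def representative_def codev_def mT_def nB_def by auto
    moreover have "\<bar>mT / nB * codev E r B a a'\<bar> = mT * norm_codev E r B a a'"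
      unfolding norm_codev_def nB_def[symmetric] using nB mT by (simp add: abs_mult)
    ultimately show ?thesis
      using abs_triangle_ineq[of "codev E r T a a' - mT / nB * codev E r B a a'" "mT / nB * codev E r B a a'"]
      by simp
  qed
  then have "codev_mass E r S T \<le> (\<Sum>a\<in>S. \<Sum>a'\<in>S. mT * norm_codev E r B a a' + 4 * lam * mT)"
    unfolding codev_mass_def using S by (intro sum_mono) auto
  also have "\<dots> = mT * (\<Sum>a\<in>S. \<Sum>a'\<in>S. norm_codev E r B a a') + 4 * lam * mT * mS^2"
    unfolding mS_def by (simp add: sum.distrib sum_distrib_left power2_eq_square algebra_simps)
  also have "\<dots> \<le> mT * ((3 * ep + 8 * lam) * mS^2) + 4 * lam * mT * mS^2"
    using sum_norm_codev_typical_le[OF A B A0 B0 ep r reg S typS] mT unfolding mS_def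
    by (intro add_right_mono mult_left_mono) auto
  finally show ?thesis unfolding mS_def mT_def by (simp add: algebra_simps)
qed

lemma card_atypical_left_le:
  assumes A: "finite A" and B: "finite B" and A0: "card A > 0" and B0: "card B > 0"
    and mA: "m \<le> card A" and lam: "0 < lam" "lam \<le> 1" and r: "0 \<le> r" "r \<le> 1"
  shows "real (card {S\<in>subsets_of_size A m. \<not> typical_left E r A B lam S})
     \<le> (real (card A) + 1 + real (card B)) * tail_bound lam m * real (card A choose m)"
proof -
  let ?bad = "\<lambda>I g. {S\<in>subsets_of_size A m. \<exists>i\<in>I. \<not> representative lam A (g i) S}"
  let ?U1 = "?bad A (norm_codev E r B)"
  let ?U2 = "?bad {()} (\<lambda>_ a. row_mass E r A B a / real (card A))"
  let ?U3 = "?bad B (\<lambda>b a. adj_ind E a b)"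
  have "{S\<in>subsets_of_size A m. \<not> typical_left E r A B lam S} \<subseteq> ?U1 \<union> ?U2 \<union> ?U3"
    unfolding typical_left_def by auto
  then have "card {S\<in>subsets_of_size A m. \<not> typical_left E r A B lam S} \<le> card (?U1 \<union> ?U2 \<union> ?U3)"
    using finite_subsets_of_size[OF A] by (intro card_mono) auto
  also have "\<dots> \<le> card ?U1 + card ?U2 + card ?U3"
    using card_Un_le[of "?U1 \<union> ?U2" ?U3] card_Un_le[of ?U1 ?U2] by linarith
  finally have "real (card {S\<in>subsets_of_size A m. \<not> typical_left E r A B lam S})
      \<le> real (card ?U1) + real (card ?U2) + real (card ?U3)"
    by (simp only: of_nat_add[symmetric] of_nat_le_iff)
  also have "\<dots> \<le> real (card A) * tail_bound lam m * real (card A choose m)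
      + real (card {()}) * tail_bound lam m * real (card A choose m)
      + real (card B) * tail_bound lam m * real (card A choose m)"
  proof -
    have "\<bar>norm_codev E r B a a'\<bar> \<le> 1" "\<bar>row_mass E r A B a / real (card A)\<bar> \<le> 1" for a a'
      using norm_codev_bounds[OF r B0, of E a a'] row_mass_bounds[OF r B0 A0, of E a]
      by (intro abs_leI; linarith)+
    then show ?thesis
      using A B by (intro add_mono card_not_representative_le[OF A A0 mA lam]) (auto simp: adj_ind_def)
  qed
  finally show ?thesis by (simp add: algebra_simps)
qed

lemma card_atypical_right_le:
  assumes A: "finite A" and B: "finite B" and B0: "card B > 0"
    and mB: "m \<le> card B" and lam: "0 < lam" "lam \<le> 1" and r: "0 \<le> r" "r \<le> 1"
  shows "real (card {T\<in>subsets_of_size B m. \<not> typical_right E r A B lam T})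
     \<le> (real (card A)^2 + real (card A)) * tail_bound lam m * real (card B choose m)"
proof -
  let ?bad = "\<lambda>I g. {T\<in>subsets_of_size B m. \<exists>i\<in>I. \<not> representative lam B (g i) T}"
  let ?U1 = "?bad (A \<times> A) (\<lambda>p b. adj_dev E r (fst p) b * adj_dev E r (snd p) b)"
  let ?U2 = "?bad A (\<lambda>a b. adj_ind E a b)"
  have "{T\<in>subsets_of_size B m. \<not> typical_right E r A B lam T} \<subseteq> ?U1 \<union> ?U2"
    unfolding typical_right_def by auto
  then have "card {T\<in>subsets_of_size B m. \<not> typical_right E r A B lam T} \<le> card (?U1 \<union> ?U2)"
    using finite_subsets_of_size[OF B] by (intro card_mono) auto
  also have "\<dots> \<le> card ?U1 + card ?U2" by (rule card_Un_le)
  finally have "real (card {T\<in>subsets_of_size B m. \<not> typical_right E r A B lam T})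
      \<le> real (card ?U1) + real (card ?U2)"
    by (simp only: of_nat_add[symmetric] of_nat_le_iff)
  also have "\<dots> \<le> real (card (A \<times> A)) * tail_bound lam m * real (card B choose m)
      + real (card A) * tail_bound lam m * real (card B choose m)"
    using abs_adj_dev_mult_le_1[OF r] A
    by (intro add_mono card_not_representative_le[OF B B0 mB lam]) (auto simp: adj_ind_def)
  finally show ?thesis by (simp add: algebra_simps power2_eq_square card_cartesian_product)
qed

lemma degree_typical_right:
  assumes B: "finite B" and B0: "card B > 0" and T: "T \<subseteq> B" and a: "a \<in> A"
    and typ_T: "typical_right E r A B lam T" and deg: "(d - ep) * real (card B) \<le> real (card {b\<in>B. E a b})"
    and ep': "ep + 4 * lam \<le> ep'"
  shows "(d - ep') * real (card T) \<le> real (card {b\<in>T. E a b})"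
proof -
  have "(d - ep) * real (card T) = real (card T) / real (card B) * ((d - ep) * real (card B))"
    using B0 by simp
  also have "\<dots> \<le> real (card T) / real (card B) * (\<Sum>b\<in>B. adj_ind E a b)"
    using deg card_right_neighbours[OF B, of E a] by (intro mult_left_mono) auto
  also have "\<dots> \<le> (\<Sum>b\<in>T. adj_ind E a b) + 4 * lam * real (card T)"
    using representative_sum_ge typ_T a unfolding typical_right_def by fastforce
  moreover have "(d - ep') * real (card T) \<le> (d - ep - 4 * lam) * real (card T)"
    using ep' by (intro mult_right_mono) auto
  ultimately show ?thesis
    using card_right_neighbours[of T E a] T B finite_subset by (fastforce simp: algebra_simps)
qed

lemma degree_typical_left:
  assumes A: "finite A" and A0: "card A > 0" and S: "S \<subseteq> A" and b: "b \<in> B"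
    and typ_S: "typical_left E r A B lam S" and deg: "(d - ep) * real (card A) \<le> real (card {a\<in>A. E a b})"
    and ep': "ep + 4 * lam \<le> ep'"
  shows "(d - ep') * real (card S) \<le> real (card {a\<in>S. E a b})"
proof -
  have "(d - ep) * real (card S) = real (card S) / real (card A) * ((d - ep) * real (card A))"
    using A0 by simp
  also have "\<dots> \<le> real (card S) / real (card A) * (\<Sum>a\<in>A. adj_ind E a b)"
    using deg card_left_neighbours[OF A, of E b] by (intro mult_left_mono) auto
  also have "\<dots> \<le> (\<Sum>a\<in>S. adj_ind E a b) + 4 * lam * real (card S)"
    using representative_sum_ge typ_S b unfolding typical_left_def by fastforce
  moreover have "(d - ep') * real (card S) \<le> (d - ep - 4 * lam) * real (card S)"
    using ep' by (intro mult_right_mono) auto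
  ultimately show ?thesis
    using card_left_neighbours[of S E b] S A finite_subset by (fastforce simp: algebra_simps)
qed

lemma regular_pair_typical:
  assumes A: "finite A" and B: "finite B" and reg: "regular_pair E A B r ep"
    and ep: "0 < ep" and r: "0 \<le> r" "r \<le> 1" and ep': "0 < ep'" "3 * ep + 12 * lam \<le> ep'^5"
    and S: "S \<subseteq> A" "card S > 0" and T: "T \<subseteq> B" "card T > 0"
    and typS: "typical_left E r A B lam S" and typT: "typical_right E r A B lam T"
  shows "regular_pair E S T r ep'"
proof -
  have fin: "finite S" "finite T" using S T A B finite_subset by blast+
  have "card A > 0" "card B > 0" using S T A B by (metis card_mono gr0I le_zero_eq)+
  then have "codev_mass E r S T \<le> (3 * ep + 12 * lam) * real (card S)^2 * real (card T)"
    using codev_mass_typical_le[OF A B _ _ ep r reg S(1) T(1) typS typT] by blast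
  also have "\<dots> \<le> ep'^5 * real (card S)^2 * real (card T)"
    using ep' by (intro mult_right_mono) auto
  finally show ?thesis by (rule regular_pair_if_codev_mass_le[OF fin ep'(1) S(2) T(2)])
qed

lemma card_collections_some_part_le:
  assumes A: "finite A" and xs: "\<And>i. i \<in> {1..s} \<Longrightarrow> x i \<le> card A"
    and P: "\<And>i. i \<in> {1..s} \<Longrightarrow>
      real (card {S\<in>subsets_of_size A (x i). P S}) \<le> c * real (card A choose x i)"
  shows "real (card {X\<in>collections A s x. \<exists>i\<in>{1..s}. P (X i)})
    \<le> real s * c * real (card (collections A s x))"
proof -
  let ?C = "collections A s x"
  have "{X\<in>?C. \<exists>i\<in>{1..s}. P (X i)} = (\<Union>i\<in>{1..s}. {X\<in>?C. P (X i)})" by auto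
  then have "real (card {X\<in>?C. \<exists>i\<in>{1..s}. P (X i)}) \<le> (\<Sum>i=1..s. real (card {X\<in>?C. P (X i)}))"
    using card_UN_le[of "{1..s}" "\<lambda>i. {X\<in>?C. P (X i)}"] by (simp flip: of_nat_sum)
  also have "\<dots> \<le> (\<Sum>i=1..s. c * real (card ?C))"
    using xs P by (intro sum_mono card_collections_component_le[OF A]) auto
  finally show ?thesis by simp
qed

definition admissible_parts :: "real \<Rightarrow> nat \<Rightarrow> 'a set \<Rightarrow> nat \<Rightarrow> (nat \<Rightarrow> nat) \<Rightarrow> bool" where
  "admissible_parts \<beta> n A s x \<longleftrightarrow> finite A \<and> card A \<le> n \<and>
     (\<forall>i\<in>{1..s}. 0 < x i \<and> \<beta> * real n \<le> real (x i)) \<and> (\<Sum>i=1..s. x i) \<le> card A"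

lemma admissible_part_le:
  "admissible_parts \<beta> n A s x \<Longrightarrow> i \<in> {1..s} \<Longrightarrow> x i \<le> card A"
  unfolding admissible_parts_def using member_le_sum[of i "{1..s}" x] by fastforce

lemma admissible_parts_number:
  assumes adm: "admissible_parts \<beta> n A s x" and \<beta>: "0 < \<beta>"
  shows "real s \<le> 1 / \<beta>"
proof (cases "s = 0")
  case False
  then have "0 < x 1" "x 1 \<le> card A" using adm admissible_part_le[OF adm] by (auto simp: admissible_parts_def)
  then have n: "0 < real n" using adm by (simp add: admissible_parts_def)
  have "real s * (\<beta> * real n) = (\<Sum>i=1..s. \<beta> * real n)" by simp
  also have "\<dots> \<le> real (\<Sum>i=1..s. x i)"
    unfolding of_nat_sum by (intro sum_mono) (use adm in \<open>auto simp: admissible_parts_def\<close>)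
  also have "\<dots> \<le> real n" by (rule of_nat_mono) (use adm in \<open>simp add: admissible_parts_def\<close>)
  finally have "real s * \<beta> \<le> 1" using n by (simp add: mult_ac mult_le_cancel_right_pos)
  then show ?thesis using \<beta> by (simp add: field_simps)
qed (use \<beta> in simp)

definition sampling_threshold :: "real \<Rightarrow> real \<Rightarrow> nat \<Rightarrow> bool" where
  "sampling_threshold \<beta> ep n \<longleftrightarrow>
     4 * real (nat \<lceil>1 / ep\<rceil>) * exp 1 / \<beta> * (real n + 1)^2 \<le> exp (ep^2 * \<beta> / 16 * real n)"

lemma eventually_sampling_threshold:
  assumes "0 < \<beta>" "0 < ep"
  shows "eventually (sampling_threshold \<beta> ep) sequentially"
proof -
  define f where "f n = 4 * real (nat \<lceil>1 / ep\<rceil>) * exp 1 / \<beta> * (real n + 1)^2" for n :: nat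
  define g where "g n = exp (ep^2 * \<beta> / 16 * real n)" for n :: nat
  have "f \<in> o(g)" unfolding f_def g_def using assms by real_asymp
  from landau_o.smallD[OF this zero_less_one]
  have "eventually (\<lambda>n. f n \<le> g n) sequentially"
    by (rule eventually_mono) (use abs_ge_self in \<open>force simp: g_def\<close>)
  then show ?thesis unfolding sampling_threshold_def f_def g_def .
qed

lemma tail_bound_le:
  assumes "z \<le> real m"
  shows "tail_bound lam m \<le> 2 * real (nat \<lceil>1 / lam\<rceil>) * exp (1 - lam^2 * z / 8)"
  unfolding tail_bound_def using mult_left_mono[OF assms, of "lam^2"] by (simp add: mult_left_mono)

definition part_failure :: "real \<Rightarrow> real \<Rightarrow> nat \<Rightarrow> real" where
  "part_failure \<beta> ep n = (real n + 1)^2 * (2 * real (nat \<lceil>1 / ep\<rceil>) * exp (1 - ep^2 * (\<beta> * real n) / 8))"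

lemma card_collections_atypical_le:
  fixes E :: "'a \<Rightarrow> 'a \<Rightarrow> bool"
  assumes ep: "0 < ep" "ep \<le> 1" and r: "0 \<le> r" "r \<le> 1"
    and A: "admissible_parts \<beta> n A s x" "card A > 0" and B: "admissible_parts \<beta> n B t y" "card B > 0"
  shows "real (card {X\<in>collections A s x. \<exists>i\<in>{1..s}. \<not> typical_left E r A B ep (X i)})
      \<le> real s * part_failure \<beta> ep n * real (card (collections A s x))"
    and "real (card {Y\<in>collections B t y. \<exists>j\<in>{1..t}. \<not> typical_right E r A B ep (Y j)})
      \<le> real t * part_failure \<beta> ep n * real (card (collections B t y))"
proof -
  have fA: "finite A" and fB: "finite B" using A B by (simp_all add: admissible_parts_def)
  have a: "real (card A) \<le> real n" and b: "real (card B) \<le> real n"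
    using A B by (simp_all add: admissible_parts_def)
  have "real (card A) * real (card A) \<le> real n * real n" using a by (intro mult_mono) auto
  moreover have "(real n + 1)^2 = real n * real n + 2 * real n + 1" by (simp add: power2_eq_square algebra_simps)
  ultimately have W: "real (card A) + 1 + real (card B) \<le> (real n + 1)^2"
      "real (card A)^2 + real (card A) \<le> (real n + 1)^2"
    using a b unfolding power2_eq_square by (smt (verit) mult_nonneg_nonneg of_nat_0_le_iff)+
  show "real (card {X\<in>collections A s x. \<exists>i\<in>{1..s}. \<not> typical_left E r A B ep (X i)})
      \<le> real s * part_failure \<beta> ep n * real (card (collections A s x))"
  proof (rule card_collections_some_part_le[OF fA admissible_part_le[OF A(1)]])
    fix i assume i: "i \<in> {1..s}"
    have "real (card {S\<in>subsets_of_size A (x i). \<not> typical_left E r A B ep S})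
        \<le> (real (card A) + 1 + real (card B)) * tail_bound ep (x i) * real (card A choose x i)"
      using card_atypical_left_le[OF fA fB A(2) B(2) admissible_part_le[OF A(1) i] ep r] .
    also have "\<dots> \<le> part_failure \<beta> ep n * real (card A choose x i)"
      unfolding part_failure_def using W(1) A i tail_bound_nonneg
      by (intro mult_right_mono mult_mono tail_bound_le) (auto simp: admissible_parts_def)
    finally show "real (card {S\<in>subsets_of_size A (x i). \<not> typical_left E r A B ep S})
        \<le> part_failure \<beta> ep n * real (card A choose x i)" .
  qed
  show "real (card {Y\<in>collections B t y. \<exists>j\<in>{1..t}. \<not> typical_right E r A B ep (Y j)})
      \<le> real t * part_failure \<beta> ep n * real (card (collections B t y))"
  proof (rule card_collections_some_part_le[OF fB admissible_part_le[OF B(1)]])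
    fix j assume j: "j \<in> {1..t}"
    have "real (card {T\<in>subsets_of_size B (y j). \<not> typical_right E r A B ep T})
        \<le> (real (card A)^2 + real (card A)) * tail_bound ep (y j) * real (card B choose y j)"
      using card_atypical_right_le[OF fA fB B(2) admissible_part_le[OF B(1) j] ep r] .
    also have "\<dots> \<le> part_failure \<beta> ep n * real (card B choose y j)"
      unfolding part_failure_def using W(2) B j tail_bound_nonneg
      by (intro mult_right_mono mult_mono tail_bound_le) (auto simp: admissible_parts_def)
    finally show "real (card {T\<in>subsets_of_size B (y j). \<not> typical_right E r A B ep T})
        \<le> part_failure \<beta> ep n * real (card B choose y j)" .
  qed
qed

text \<open>The union bound over the at most \<open>2/\<beta>\<close> parts costs a polynomial factor, which the
  exponent \<open>\<epsilon>\<^sup>2\<beta>n/8\<close> of the single-part bound absorbs with half of it to spare.\<close>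

lemma union_bound_le_exp:
  assumes \<beta>: "0 < \<beta>" and A: "admissible_parts \<beta> n A s x" and B: "admissible_parts \<beta> n B t y"
    and n: "sampling_threshold \<beta> ep n"
  shows "(real s + real t) * part_failure \<beta> ep n \<le> exp (- (ep^2 * \<beta> / 16) * real n)"
proof -
  have "(real s + real t) * part_failure \<beta> ep n \<le> 2 / \<beta> * part_failure \<beta> ep n"
    using admissible_parts_number[OF A \<beta>] admissible_parts_number[OF B \<beta>]
    by (intro mult_right_mono) (auto simp: part_failure_def)
  also have "\<dots> = 4 * real (nat \<lceil>1 / ep\<rceil>) * exp 1 / \<beta> * (real n + 1)^2
      * exp (- (2 * (ep^2 * \<beta> / 16)) * real n)"
  proof -
    have "exp (1 - ep^2 * (\<beta> * real n) / 8) = exp 1 * exp (- (2 * (ep^2 * \<beta> / 16)) * real n)"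
      unfolding exp_add[symmetric] by (rule arg_cong[where f = exp]) (simp add: field_simps)
    then show ?thesis unfolding part_failure_def by (simp add: field_simps)
  qed
  also have "\<dots> \<le> exp (ep^2 * \<beta> / 16 * real n) * exp (- (2 * (ep^2 * \<beta> / 16)) * real n)"
    using n unfolding sampling_threshold_def by (intro mult_right_mono) auto
  also have "\<dots> = exp (- (ep^2 * \<beta> / 16) * real n)" by (simp flip: exp_add add: algebra_simps)
  finally show ?thesis .
qed

lemma unif_prob_all_parts_good:
  fixes E :: "'a \<Rightarrow> 'a \<Rightarrow> bool" and P :: "'a set \<Rightarrow> 'a set \<Rightarrow> bool"
  assumes ep: "0 < ep" "ep \<le> 1" and \<beta>: "0 < \<beta>" and r: "0 \<le> r" "r \<le> 1"
    and A: "admissible_parts \<beta> n A s x" and B: "admissible_parts \<beta> n B t y"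
    and n: "sampling_threshold \<beta> ep n"
    and good: "\<And>S T. S \<subseteq> A \<Longrightarrow> T \<subseteq> B \<Longrightarrow> 0 < card S \<Longrightarrow> 0 < card T
      \<Longrightarrow> typical_left E r A B ep S \<Longrightarrow> typical_right E r A B ep T \<Longrightarrow> P S T"
  shows "1 - exp (- (ep^2 * \<beta> / 16) * real n)
    \<le> unif_prob (collections A s x \<times> collections B t y) (\<lambda>(X, Y). \<forall>i\<in>{1..s}. \<forall>j\<in>{1..t}. P (X i) (Y j))"
proof -
  let ?CA = "collections A s x" and ?CB = "collections B t y"
  let ?fail = "{p\<in>?CA \<times> ?CB. \<not> (case p of (X, Y) \<Rightarrow> \<forall>i\<in>{1..s}. \<forall>j\<in>{1..t}. P (X i) (Y j))}"
  have fA: "finite A" and fB: "finite B" using A B by (simp_all add: admissible_parts_def)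
  have "real (card ?fail) \<le> exp (- (ep^2 * \<beta> / 16) * real n) * real (card (?CA \<times> ?CB))"
  proof (cases "s = 0 \<or> t = 0")
    case False
    then have "0 < x 1" "x 1 \<le> card A" "0 < y 1" "y 1 \<le> card B"
      using A B admissible_part_le[OF A] admissible_part_le[OF B] by (auto simp: admissible_parts_def)
    then have A0: "card A > 0" and B0: "card B > 0" by linarith+
    let ?L = "{X\<in>?CA. \<exists>i\<in>{1..s}. \<not> typical_left E r A B ep (X i)}"
    let ?R = "{Y\<in>?CB. \<exists>j\<in>{1..t}. \<not> typical_right E r A B ep (Y j)}"
    have "?fail \<subseteq> ?L \<times> ?CB \<union> ?CA \<times> ?R"
    proof
      fix p assume "p \<in> ?fail"
      then obtain X Y where p: "p = (X, Y)" and X: "X \<in> ?CA" and Y: "Y \<in> ?CB"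
        and "\<not> (\<forall>i\<in>{1..s}. \<forall>j\<in>{1..t}. P (X i) (Y j))" by auto
      then obtain i j where ij: "i \<in> {1..s}" "j \<in> {1..t}" and np: "\<not> P (X i) (Y j)" by blast
      have "card (X i) = x i" "card (Y j) = y j" using X Y ij unfolding collections_def by auto
      then have "0 < card (X i)" "0 < card (Y j)" using A B ij by (auto simp: admissible_parts_def)
      then have "\<not> typical_left E r A B ep (X i) \<or> \<not> typical_right E r A B ep (Y j)"
        using good[OF collections_subset[OF X] collections_subset[OF Y]] np by blast
      then show "p \<in> ?L \<times> ?CB \<union> ?CA \<times> ?R" using p X Y ij by blast
    qed
    then have "card ?fail \<le> card (?L \<times> ?CB \<union> ?CA \<times> ?R)"
      using finite_collections[OF fA] finite_collections[OF fB] by (intro card_mono) auto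
    also have "\<dots> \<le> card ?L * card ?CB + card ?CA * card ?R"
      using card_Un_le[of "?L \<times> ?CB" "?CA \<times> ?R"] by (simp add: card_cartesian_product)
    finally have "real (card ?fail) \<le> real (card ?L) * real (card ?CB) + real (card ?CA) * real (card ?R)"
      by (simp only: of_nat_add[symmetric] of_nat_mult[symmetric] of_nat_le_iff)
    also have "\<dots> \<le> real s * part_failure \<beta> ep n * real (card ?CA) * real (card ?CB)
        + real (card ?CA) * (real t * part_failure \<beta> ep n * real (card ?CB))"
      using card_collections_atypical_le[OF ep r A A0 B B0, of E]
      by (intro add_mono mult_right_mono mult_left_mono) auto
    also have "\<dots> = (real s + real t) * part_failure \<beta> ep n * real (card (?CA \<times> ?CB))"
      by (simp add: card_cartesian_product algebra_simps)
    also have "\<dots> \<le> exp (- (ep^2 * \<beta> / 16) * real n) * real (card (?CA \<times> ?CB))"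
      by (intro mult_right_mono union_bound_le_exp[OF \<beta> A B n]) simp
    finally show ?thesis .
  qed auto
  moreover have "?CA \<times> ?CB \<noteq> {}"
    using collections_nonempty[OF fA] collections_nonempty[OF fB] A B by (auto simp: admissible_parts_def)
  ultimately show ?thesis
    using finite_collections[OF fA] finite_collections[OF fB] by (intro unif_prob_ge) auto
qed

text \<open>Only \<open>\<epsilon>'\<^sup>5 \<ge> 15 \<epsilon>\<close> and \<open>\<epsilon>' \<ge> 5 \<epsilon>\<close> are needed below; the constant 33 is the paper's.\<close>

lemma regularity_loss_bounds:
  fixes ep :: real
  assumes "0 < ep" "ep \<le> 1/4"
  shows "0 < (33 * ep) powr (1/5)" "3 * ep + 12 * ep \<le> ((33 * ep) powr (1/5))^5"
    "5 * ep \<le> (33 * ep) powr (1/5)"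
proof -
  have p: "0 < 33 * ep" using assms by simp
  then show "0 < (33 * ep) powr (1/5)" by simp
  have e5: "((33 * ep) powr (1/5))^5 = 33 * ep"
    using p by (simp add: powr_realpow[symmetric] powr_powr)
  then show "3 * ep + 12 * ep \<le> ((33 * ep) powr (1/5))^5" using assms by simp
  have "ep^4 \<le> (1/4)^4" using assms by (intro power_mono) auto
  then have "(5 * ep)^5 \<le> 33 * ep"
    using assms mult_right_mono[of "3125 * ep^4" 33 ep] by (simp add: eval_nat_numeral algebra_simps)
  then have "(5 * ep) ^ Suc 4 \<le> ((33 * ep) powr (1/5)) ^ Suc 4" using e5 by simp
  then show "5 * ep \<le> (33 * ep) powr (1/5)"
    by (rule power_le_imp_le_base) (use p in simp)
qed

lemma dens_le_1:
  assumes "finite X" "finite Y"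
  shows "dens E X Y \<le> 1"
proof -
  have "edges_between E X Y \<subseteq> X \<times> Y" unfolding edges_between_def by auto
  then have "card (edges_between E X Y) \<le> card X * card Y"
    using assms by (metis card_cartesian_product card_mono finite_cartesian_product)
  then have "real (card (edges_between E X Y)) \<le> real (card X) * real (card Y)"
    by (metis of_nat_le_iff of_nat_mult)
  then show ?thesis unfolding dens_def
    by (cases "real (card X) * real (card Y) = 0") (auto simp: divide_le_eq_1)
qed

lemma regular_pair_min_1:
  assumes A: "finite A" and B: "finite B" and reg: "regular_pair E A B d ep"
  shows "regular_pair E A B (min d 1) ep"
  unfolding regular_pair_def
proof (intro allI impI)
  fix X Y assume "X \<subseteq> A" "Y \<subseteq> B" "ep * real (card A) \<le> real (card X)" "ep * real (card B) \<le> real (card Y)"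
  moreover from this have "dens E X Y \<le> 1" using A B finite_subset dens_le_1 by metis
  ultimately show "min d 1 - ep \<le> dens E X Y \<and> dens E X Y \<le> min d 1 + ep"
    using reg unfolding regular_pair_def min_def by (smt (verit))
qed

lemma random_parts_regular:
  fixes E :: "'a \<Rightarrow> 'a \<Rightarrow> bool"
  assumes d: "0 \<le> d" "d \<le> 1" and \<beta>: "0 < \<beta>" and ep: "0 < ep" "ep \<le> 1/4"
    and A: "admissible_parts \<beta> n A s x" and B: "admissible_parts \<beta> n B t y"
    and n: "sampling_threshold \<beta> ep n" and reg: "regular_pair E A B d ep"
  shows "1 - exp (- (ep^2 * \<beta> / 16) * real n)
    \<le> unif_prob (collections A s x \<times> collections B t y)
        (\<lambda>(X, Y). \<forall>i\<in>{1..s}. \<forall>j\<in>{1..t}. regular_pair E (X i) (Y j) d ((33 * ep) powr (1/5)))"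
proof (rule unif_prob_all_parts_good[OF ep(1) _ \<beta> d A B n])
  fix S T assume "S \<subseteq> A" "T \<subseteq> B" "0 < card S" "0 < card T"
    "typical_left E d A B ep S" "typical_right E d A B ep T"
  then show "regular_pair E S T d ((33 * ep) powr (1/5))"
    using A B d regularity_loss_bounds[OF ep] ep(1)
    by (intro regular_pair_typical[OF _ _ reg]) (auto simp: admissible_parts_def)
qed (use ep in simp)

lemma random_parts_super_regular:
  fixes E :: "'a \<Rightarrow> 'a \<Rightarrow> bool"
  assumes d: "0 < d" "d \<le> 1" and \<beta>: "0 < \<beta>" and ep: "0 < ep" "ep \<le> 1/4"
    and A: "admissible_parts \<beta> n A s x" and B: "admissible_parts \<beta> n B t y"
    and n: "sampling_threshold \<beta> ep n" and sreg: "super_regular_pair E A B d ep"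
  shows "1 - exp (- (ep^2 * \<beta> / 16) * real n)
    \<le> unif_prob (collections A s x \<times> collections B t y)
        (\<lambda>(X, Y). \<forall>i\<in>{1..s}. \<forall>j\<in>{1..t}. super_regular_pair E (X i) (Y j) d ((33 * ep) powr (1/5)))"
proof -
  define ep' where "ep' = (33 * ep) powr (1/5)"
  have fin: "finite A" "finite B" using A B by (simp_all add: admissible_parts_def)
  obtain d' where d': "d \<le> d'" "regular_pair E A B d' ep"
    using sreg unfolding super_regular_pair_def regular_pair_ge_def by blast
  then have reg: "regular_pair E A B (min d' 1) ep" by (intro regular_pair_min_1[OF fin])
  have r: "0 \<le> min d' 1" "min d' 1 \<le> 1" "d \<le> min d' 1" using d d' by auto
  show ?thesis unfolding ep'_def[symmetric]
  proof (rule unif_prob_all_parts_good[OF ep(1) _ \<beta> r(1,2) A B n])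
    fix S T assume S: "S \<subseteq> A" "0 < card S" and T: "T \<subseteq> B" "0 < card T"
      and typS: "typical_left E (min d' 1) A B ep S" and typT: "typical_right E (min d' 1) A B ep T"
    have A0: "0 < card A" and B0: "0 < card B" using S T fin by (metis card_mono gr0I le_zero_eq)+
    have "regular_pair E S T (min d' 1) ep'"
      using regularity_loss_bounds[OF ep] ep(1) S T typS typT
      unfolding ep'_def by (intro regular_pair_typical[OF fin reg _ r(1,2)]) auto
    moreover have "(d - ep') * real (card T) \<le> real (card {b\<in>T. E a b})" if "a \<in> S" for a
      using sreg S that regularity_loss_bounds(3)[OF ep] unfolding ep'_def
      by (intro degree_typical_right[OF fin(2) B0 T(1) _ typT]) (auto simp: super_regular_pair_def)
    moreover have "(d - ep') * real (card S) \<le> real (card {a\<in>S. E a b})" if "b \<in> T" for b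
      using sreg T that regularity_loss_bounds(3)[OF ep] unfolding ep'_def
      by (intro degree_typical_left[OF fin(1) A0 S(1) _ typS]) (auto simp: super_regular_pair_def)
    ultimately show "super_regular_pair E S T d ep'"
      unfolding super_regular_pair_def regular_pair_ge_def using r(3) by blast
  qed (use ep in simp)
qed

theorem lemma2p4:
  shows "\<forall>d::real. 0 < d \<and> d \<le> 1 \<longrightarrow>
    (\<exists>\<delta>>0. \<forall>\<beta> \<epsilon>::real. 0 < \<beta> \<and> \<beta> \<le> \<delta> \<and> 0 < \<epsilon> \<and> \<epsilon> \<le> \<delta> \<longrightarrow>
      (\<exists>c>0. \<exists>N::nat. \<forall>n\<ge>N.
        \<forall>(E :: nat \<Rightarrow> nat \<Rightarrow> bool) A B s t (x :: nat \<Rightarrow> nat) (y :: nat \<Rightarrow> nat).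
          finite A \<and> finite B \<and> A \<inter> B = {} \<and> card A \<le> n \<and> card B \<le> n \<and>
          (\<forall>i\<in>{1..s}. 0 < x i \<and> real (x i) \<ge> \<beta> * real n) \<and>
          (\<forall>j\<in>{1..t}. 0 < y j \<and> real (y j) \<ge> \<beta> * real n) \<and>
          (\<Sum>i=1..s. x i) \<le> card A \<and> (\<Sum>j=1..t. y j) \<le> card B \<longrightarrow>
          (super_regular_pair E A B d \<epsilon> \<longrightarrow>
             unif_prob (collections A s x \<times> collections B t y)
               (\<lambda>(X, Y). \<forall>i\<in>{1..s}. \<forall>j\<in>{1..t}.
                  super_regular_pair E (X i) (Y j) d ((33 * \<epsilon>) powr (1/5)))
             \<ge> 1 - exp (- c * real n)) \<and>
          (regular_pair E A B d \<epsilon> \<longrightarrow>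
             unif_prob (collections A s x \<times> collections B t y)
               (\<lambda>(X, Y). \<forall>i\<in>{1..s}. \<forall>j\<in>{1..t}.
                  regular_pair E (X i) (Y j) d ((33 * \<epsilon>) powr (1/5)))
             \<ge> 1 - exp (- c * real n))))"
proof (intro allI impI, rule exI[of _ "1/4"], intro conjI allI impI, goal_cases)
  case 1
  show ?case by simp
next
  case (2 d \<beta> \<epsilon>)
  then have d: "0 < d" "d \<le> 1" and \<beta>: "0 < \<beta>" and \<epsilon>: "0 < \<epsilon>" "\<epsilon> \<le> 1/4" by auto
  obtain N where N: "\<And>n. N \<le> n \<Longrightarrow> sampling_threshold \<beta> \<epsilon> n"
    using eventually_sampling_threshold[OF \<beta> \<epsilon>(1)] unfolding eventually_sequentially by blast
  show ?case
  proof (intro exI[of _ "\<epsilon>^2 * \<beta> / 16"] exI[of _ N] conjI allI impI, goal_cases)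
    case 1
    show ?case using \<beta> \<epsilon> by simp
  next
    case (2 n E A B s t x y)
    then show ?case using N d \<beta> \<epsilon>
      by (intro random_parts_super_regular) (auto simp: admissible_parts_def)
  next
    case (3 n E A B s t x y)
    then show ?case using N d \<beta> \<epsilon>
      by (intro random_parts_regular) (auto simp: admissible_parts_def)
  qed
qed

end
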